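(* Let $M$ be a $d$-dimensional Hausdorff $\sigma$-compact manifold, $(U_i,\varphi_i)_{i\in I}$ a locally finite atlas of relatively compact charts with $\varphi_i(U_i)=\mathbb{R}^d$, $V_i\subseteq M$ open with $\overline{V_i}\subseteq U_i$, and $(\chi_i)_{i\in I}$ a smooth partition of unity with $\operatorname{supp}\chi_i\subseteq V_i$. For $i\in I$ let $J_i=\{j\in I: U_j\cap U_i\ne\emptyset\}$ (a finite set). Fix $n\in\mathbb{N}$. Then the mixing map $$\mu\colon\bigoplus_{i\in I}C^\infty_{\mathrm{co}}(U_i,\mathbb{R}^n)\to\bigoplus_{i\in I}C^\infty_{\mathrm{co}}(V_i,\mathbb{R}^n),\qquad(f_i)_{i\in I}\mapsto\Big(\sum_{j\in J_i}(\chi_j|_{V_i\cap V_j})\cdot f_j|_{V_i\cap V_j}\Big)_{i\in I},$$ where each summand is extended by $0$ to a smooth function on $V_i$, is well defined and continuous linear, and its image is contained in the closed subspace $\{(g_i)_{i\in I}: g_j|_{V_i\cap V_j}=g_i|_{V_i\cap V_j}\ \forall i,j\in I\}$.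
   Context: $C^\infty_{\mathrm{co}}(W,\mathbb{R}^n)$ denotes smooth maps on an open $W$ with the compact-open $C^\infty$-topology (uniform convergence of all derivatives on compact sets); direct sums carry the locally convex direct sum topology. *)

theory Defs
  imports "HOL-Analysis.Analysis"
begin

definition pdir :: "'d::finite \<Rightarrow> (real^'d \<Rightarrow> 'b::real_normed_vector) \<Rightarrow> real^'d \<Rightarrow> 'b" where
  "pdir k g = (\<lambda>x. frechet_derivative g (at x) (axis k 1))"

fun pder :: "'d::finite list \<Rightarrow> (real^'d \<Rightarrow> 'b::real_normed_vector) \<Rightarrow> real^'d \<Rightarrow> 'b" where
  "pder [] g = g"
| "pder (k # ks) g = pdir k (pder ks g)"

definition smooth_on_euc :: "(real^'d::finite \<Rightarrow> 'b::real_normed_vector) \<Rightarrow> (real^'d) set \<Rightarrow> bool" where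
  "smooth_on_euc g S \<longleftrightarrow> (\<forall>ks. pder ks g differentiable_on S)"

definition smooth_atlas ::
  "'m topology \<Rightarrow> 'i set \<Rightarrow> ('i \<Rightarrow> 'm set) \<Rightarrow> ('i \<Rightarrow> 'm \<Rightarrow> real^'d::finite) \<Rightarrow> bool" where
  "smooth_atlas M I U \<phi> \<longleftrightarrow>
     (\<forall>i\<in>I. openin M (U i) \<and> homeomorphic_map (subtopology M (U i)) (top_of_set (\<phi> i ` U i)) (\<phi> i)) \<and>
     (\<Union>i\<in>I. U i) = topspace M \<and>
     (\<forall>i\<in>I. \<forall>j\<in>I. smooth_on_euc (\<phi> j \<circ> inv_into (U i) (\<phi> i)) (\<phi> i ` (U i \<inter> U j)))"

definition mf_smooth ::
  "'i set \<Rightarrow> ('i \<Rightarrow> 'm set) \<Rightarrow> ('i \<Rightarrow> 'm \<Rightarrow> real^'d::finite) \<Rightarrow> 'm set \<Rightarrow> ('m \<Rightarrow> 'b::real_normed_vector) \<Rightarrow> bool" where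
  "mf_smooth I U \<phi> W f \<longleftrightarrow> (\<forall>j\<in>I. smooth_on_euc (f \<circ> inv_into (U j) (\<phi> j)) (\<phi> j ` (U j \<inter> W)))"

text \<open>Elements are smooth maps on W, extended by 0 outside W (so that they form a vector space).\<close>
definition Cinf_space ::
  "'i set \<Rightarrow> ('i \<Rightarrow> 'm set) \<Rightarrow> ('i \<Rightarrow> 'm \<Rightarrow> real^'d::finite) \<Rightarrow> 'm set \<Rightarrow> ('m \<Rightarrow> real^'n::finite) set" where
  "Cinf_space I U \<phi> W = {f. mf_smooth I U \<phi> W f \<and> (\<forall>x. x \<notin> W \<longrightarrow> f x = 0)}"

definition Cinf_seminorms ::
  "'i set \<Rightarrow> ('i \<Rightarrow> 'm set) \<Rightarrow> ('i \<Rightarrow> 'm \<Rightarrow> real^'d::finite) \<Rightarrow> 'm set \<Rightarrow> (('m \<Rightarrow> real^'n::finite) \<Rightarrow> real) set" where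
  "Cinf_seminorms I U \<phi> W =
     {(\<lambda>f. Sup (insert 0 ((\<lambda>y. norm (pder ks (f \<circ> inv_into (U j) (\<phi> j)) y)) ` K))) | j K ks.
        j \<in> I \<and> compact K \<and> K \<subseteq> \<phi> j ` (U j \<inter> W)}"

definition Cinf_top ::
  "'i set \<Rightarrow> ('i \<Rightarrow> 'm set) \<Rightarrow> ('i \<Rightarrow> 'm \<Rightarrow> real^'d::finite) \<Rightarrow> 'm set \<Rightarrow> ('m \<Rightarrow> real^'n::finite) topology" where
  "Cinf_top I U \<phi> W = topology (\<lambda>S. S \<subseteq> Cinf_space I U \<phi> W \<and>
     (\<forall>f\<in>S. \<exists>F e. finite F \<and> F \<subseteq> Cinf_seminorms I U \<phi> W \<and> e > 0 \<and>
        {g \<in> Cinf_space I U \<phi> W. \<forall>p\<in>F. p (\<lambda>x. g x - f x) < e} \<subseteq> S))"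

definition dsum_carrier :: "'i set \<Rightarrow> ('i \<Rightarrow> ('m \<Rightarrow> 'v::real_vector) set) \<Rightarrow> ('i \<Rightarrow> 'm \<Rightarrow> 'v) set" where
  "dsum_carrier I C = {F. (\<forall>i\<in>I. F i \<in> C i) \<and> (\<forall>i. i \<notin> I \<longrightarrow> F i = (\<lambda>x. 0)) \<and>
                           finite {i\<in>I. F i \<noteq> (\<lambda>x. 0)}}"

definition inj_at :: "'i \<Rightarrow> ('m \<Rightarrow> 'v::real_vector) \<Rightarrow> 'i \<Rightarrow> 'm \<Rightarrow> 'v" where
  "inj_at i v = (\<lambda>j. if j = i then v else (\<lambda>x. 0))"

definition abs_convex :: "('i \<Rightarrow> 'm \<Rightarrow> 'v::real_vector) set \<Rightarrow> bool" where
  "abs_convex W \<longleftrightarrow> (\<forall>F\<in>W. \<forall>G\<in>W. \<forall>a b. \<bar>a\<bar> + \<bar>b\<bar> \<le> 1 \<longrightarrow> (\<lambda>i x. a *\<^sub>R F i x + b *\<^sub>R G i x) \<in> W)"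

text \<open>Finest locally convex topology making all inclusions continuous: 0-neighbourhood base
  = absolutely convex sets whose trace on every summand is a 0-neighbourhood.\<close>
definition dsum_top ::
  "'i set \<Rightarrow> ('i \<Rightarrow> ('m \<Rightarrow> 'v::real_vector) set) \<Rightarrow> ('i \<Rightarrow> ('m \<Rightarrow> 'v) topology) \<Rightarrow> ('i \<Rightarrow> 'm \<Rightarrow> 'v) topology" where
  "dsum_top I C T = topology (\<lambda>S. S \<subseteq> dsum_carrier I C \<and>
     (\<forall>F\<in>S. \<exists>W. W \<subseteq> dsum_carrier I C \<and> abs_convex W \<and>
        (\<forall>i\<in>I. \<exists>N. openin (T i) N \<and> (\<lambda>x. 0) \<in> N \<and> N \<subseteq> {v \<in> C i. inj_at i v \<in> W}) \<and>
        {(\<lambda>i x. F i x + G i x) | G. G \<in> W} \<subseteq> S))"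

definition mix :: "'i set \<Rightarrow> ('i \<Rightarrow> 'm set) \<Rightarrow> ('i \<Rightarrow> 'm set) \<Rightarrow> ('i \<Rightarrow> 'm \<Rightarrow> real)
                   \<Rightarrow> ('i \<Rightarrow> 'm \<Rightarrow> real^'n::finite) \<Rightarrow> 'i \<Rightarrow> 'm \<Rightarrow> real^'n" where
  "mix I U V \<rho> F = (\<lambda>i x. if i \<in> I \<and> x \<in> V i then
      (\<Sum>j\<in>{j\<in>I. U j \<inter> U i \<noteq> {}}. if x \<in> V j then \<rho> j x *\<^sub>R F j x else 0) else 0)"

end

theory Submission
  imports Defs
begin

(* Each component of the mixing map is a finite sum, over the charts U_l meeting U_i, of the
   multiplication maps f \<mapsto> \<rho>_l f restricted to V_i.  In a chart the Leibniz rule bounds every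
   seminorm of \<rho>_l f by finitely many seminorms of f over a compact part of the support of \<rho>_l, so
   these multiplication maps are continuous.  A linear map out of a locally convex direct sum is
   continuous as soon as its restriction to every summand is; restricted to the i-th summand, the
   mixing map is an average of finitely many multiplication maps followed by inclusions, and
   absolutely convex zero-neighbourhoods are closed under averages.  On V_i \<inter> V_j both components
   equal \<Sum>_l \<rho>_l f_l, and compatible families form a closed set because point evaluations are
   continuous. *)

section \<open>Iterated partial derivatives\<close>

lemma pdir_cong_open:
  assumes "open S" "x \<in> S" "\<And>y. y \<in> S \<Longrightarrow> f y = g y"
  shows "pdir k f x = pdir k g x"
proof -
  have "(f has_derivative D) (at x) \<longleftrightarrow> (g has_derivative D) (at x)" for D
    using assms has_derivative_transform_within_open[of f D x UNIV S g]
      has_derivative_transform_within_open[of g D x UNIV S f] by auto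
  then show ?thesis by (simp add: pdir_def frechet_derivative_def)
qed

lemma pder_cong_open:
  assumes "open S" "\<And>y. y \<in> S \<Longrightarrow> f y = g y" "y \<in> S"
  shows "pder ks f y = pder ks g y"
  using assms(3)
proof (induction ks arbitrary: y)
  case Nil
  then show ?case using assms(2) by simp
next
  case (Cons k ks)
  then show ?case using pdir_cong_open[OF assms(1) Cons.prems, of "pder ks f" "pder ks g"] by simp
qed

lemma pdir_eqI:
  assumes "(f has_derivative D) (at x)"
  shows "pdir k f x = D (axis k 1)"
  using frechet_derivative_at[OF assms] by (simp add: pdir_def)

lemma pder_zero [simp]: "pder ks (\<lambda>x. 0) = (\<lambda>x. 0)"
  by (induction ks) (auto simp: pdir_def)

lemma smooth_on_euc_zero: "smooth_on_euc (\<lambda>x. 0) S"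
  by (simp add: smooth_on_euc_def)

lemma smooth_on_euc_subset: "smooth_on_euc f S \<Longrightarrow> T \<subseteq> S \<Longrightarrow> smooth_on_euc f T"
  by (meson differentiable_on_subset smooth_on_euc_def)

lemma smooth_on_euc_has_derivative:
  assumes "smooth_on_euc f S" "open S" "x \<in> S"
  shows "(pder ks f has_derivative frechet_derivative (pder ks f) (at x)) (at x)"
  using assms frechet_derivative_works differentiable_on_eq_differentiable_at
  unfolding smooth_on_euc_def by blast

lemma differentiable_on_cong_open:
  assumes "open S" "g differentiable_on S" "\<And>y. y \<in> S \<Longrightarrow> f y = g y"
  shows "f differentiable_on S"
  unfolding differentiable_on_eq_differentiable_at[OF assms(1)]
proof
  fix x assume x: "x \<in> S"
  then obtain D where "(g has_derivative D) (at x)"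
    using assms differentiable_on_eq_differentiable_at differentiable_def by blast
  then have "(f has_derivative D) (at x)"
    using has_derivative_transform_within_open[of g D x UNIV S f] assms x by auto
  then show "f differentiable at x" unfolding differentiable_def by blast
qed

lemma smooth_on_eucI_pder:
  assumes "open S" "\<And>ks. \<exists>g. g differentiable_on S \<and> (\<forall>y\<in>S. pder ks f y = g y)"
  shows "smooth_on_euc f S"
  unfolding smooth_on_euc_def using assms differentiable_on_cong_open by metis

lemma pder_lincomb:
  fixes f g :: "real^'d::finite \<Rightarrow> 'b::real_normed_vector"
  assumes S: "open S" and f: "smooth_on_euc f S" and g: "smooth_on_euc g S" and y: "y \<in> S"
  shows "pder ks (\<lambda>x. a *\<^sub>R f x + b *\<^sub>R g x) y = a *\<^sub>R pder ks f y + b *\<^sub>R pder ks g y"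
  using y
proof (induction ks arbitrary: y)
  case Nil
  then show ?case by simp
next
  case (Cons k ks)
  have "((\<lambda>x. a *\<^sub>R pder ks f x + b *\<^sub>R pder ks g x) has_derivative
      (\<lambda>h. a *\<^sub>R frechet_derivative (pder ks f) (at y) h + b *\<^sub>R frechet_derivative (pder ks g) (at y) h)) (at y)"
    by (intro derivative_intros smooth_on_euc_has_derivative[OF f S Cons.prems]
        smooth_on_euc_has_derivative[OF g S Cons.prems])
  note pdir_eqI[OF this, of k]
  moreover have "pder (k # ks) (\<lambda>x. a *\<^sub>R f x + b *\<^sub>R g x) y
      = pdir k (\<lambda>x. a *\<^sub>R pder ks f x + b *\<^sub>R pder ks g x) y"
    using pdir_cong_open[OF S Cons.prems, of "pder ks (\<lambda>x. a *\<^sub>R f x + b *\<^sub>R g x)"] Cons.IH by simp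
  ultimately show ?case by (simp add: pdir_def)
qed

lemma smooth_on_euc_lincomb:
  fixes f g :: "real^'d::finite \<Rightarrow> 'b::real_normed_vector"
  assumes S: "open S" and f: "smooth_on_euc f S" and g: "smooth_on_euc g S"
  shows "smooth_on_euc (\<lambda>x. a *\<^sub>R f x + b *\<^sub>R g x) S"
proof (rule smooth_on_eucI_pder[OF S])
  fix ks
  have "(\<lambda>x. a *\<^sub>R pder ks f x + b *\<^sub>R pder ks g x) differentiable_on S"
    using f g unfolding smooth_on_euc_def by (intro derivative_intros) auto
  then show "\<exists>h. h differentiable_on S \<and> (\<forall>y\<in>S. pder ks (\<lambda>x. a *\<^sub>R f x + b *\<^sub>R g x) y = h y)"
    using pder_lincomb[OF S f g] by blast
qed

fun leibniz_splits :: "'d list \<Rightarrow> ('d list \<times> 'd list) list" where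
  "leibniz_splits [] = [([], [])]"
| "leibniz_splits (k # ks) = concat (map (\<lambda>(as, bs). [(k # as, bs), (as, k # bs)]) (leibniz_splits ks))"

lemma sum_list_leibniz_splits_Cons:
  "(\<Sum>p\<leftarrow>leibniz_splits (k # ks). h p) = (\<Sum>(as, bs)\<leftarrow>leibniz_splits ks. h (k # as, bs) + h (as, k # bs))"
proof -
  have "(\<Sum>p\<leftarrow>concat (map (\<lambda>(as, bs). [(k # as, bs), (as, k # bs)]) P). h p)
      = (\<Sum>(as, bs)\<leftarrow>P. h (k # as, bs) + h (as, k # bs))" for P
    by (induction P) auto
  then show ?thesis by simp
qed

lemma has_derivative_sum_list:
  assumes "\<And>p. p \<in> set P \<Longrightarrow> (f p has_derivative f' p) (at x)"
  shows "((\<lambda>y. \<Sum>p\<leftarrow>P. (f p y :: 'b::real_normed_vector)) has_derivative (\<lambda>h. \<Sum>p\<leftarrow>P. f' p h)) (at x)"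
  using assms by (induction P) (auto intro: derivative_intros)

lemma pder_scaleR:
  fixes r :: "real^'d::finite \<Rightarrow> real" and F :: "real^'d \<Rightarrow> 'b::real_normed_vector"
  assumes S: "open S" and r: "smooth_on_euc r S" and F: "smooth_on_euc F S" and y: "y \<in> S"
  shows "pder ks (\<lambda>x. r x *\<^sub>R F x) y = (\<Sum>(as, bs)\<leftarrow>leibniz_splits ks. pder as r y *\<^sub>R pder bs F y)"
  using y
proof (induction ks arbitrary: y)
  case Nil
  then show ?case by simp
next
  case (Cons k ks)
  let ?t = "\<lambda>(as, bs) x. pder as r x *\<^sub>R pder bs F x"
  have "(?t p has_derivative (\<lambda>h. pder (fst p) r y *\<^sub>R frechet_derivative (pder (snd p) F) (at y) h
        + frechet_derivative (pder (fst p) r) (at y) h *\<^sub>R pder (snd p) F y)) (at y)" for p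
    using has_derivative_scaleR[OF smooth_on_euc_has_derivative[OF r S Cons.prems]
        smooth_on_euc_has_derivative[OF F S Cons.prems]]
    by (simp add: split_def)
  then have "pdir k (\<lambda>x. \<Sum>p\<leftarrow>leibniz_splits ks. ?t p x) y
      = (\<Sum>(as, bs)\<leftarrow>leibniz_splits ks. pder (k # as) r y *\<^sub>R pder bs F y + pder as r y *\<^sub>R pder (k # bs) F y)"
    by (subst pdir_eqI[OF has_derivative_sum_list]) (auto simp: split_def add.commute pdir_def)
  also have "\<dots> = (\<Sum>(as, bs)\<leftarrow>leibniz_splits (k # ks). pder as r y *\<^sub>R pder bs F y)"
    unfolding sum_list_leibniz_splits_Cons by (simp add: split_def)
  finally show ?case
    using pdir_cong_open[OF S Cons.prems, of "pder ks (\<lambda>x. r x *\<^sub>R F x)"] Cons.IH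
    by (simp add: split_def)
qed

lemma smooth_on_euc_scaleR:
  fixes r :: "real^'d::finite \<Rightarrow> real" and F :: "real^'d \<Rightarrow> 'b::real_normed_vector"
  assumes S: "open S" and r: "smooth_on_euc r S" and F: "smooth_on_euc F S"
  shows "smooth_on_euc (\<lambda>x. r x *\<^sub>R F x) S"
proof (rule smooth_on_eucI_pder[OF S])
  fix ks
  have "(\<lambda>x. \<Sum>p\<leftarrow>P. pder (fst p) r x *\<^sub>R pder (snd p) F x) differentiable_on S" for P
    using r F unfolding smooth_on_euc_def
    by (induction P) (auto intro!: differentiable_on_add differentiable_on_scaleR)
  then show "\<exists>h. h differentiable_on S \<and> (\<forall>y\<in>S. pder ks (\<lambda>x. r x *\<^sub>R F x) y = h y)"
    using pder_scaleR[OF S r F] by (auto simp: split_def)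
qed

lemma smooth_on_euc_local:
  assumes Q: "open Q"
    and loc: "\<And>y. y \<in> Q \<Longrightarrow> \<exists>G g. open G \<and> y \<in> G \<and> smooth_on_euc g G \<and> (\<forall>z\<in>G. f z = g z)"
  shows "smooth_on_euc f Q"
  unfolding smooth_on_euc_def differentiable_on_eq_differentiable_at[OF Q]
proof (intro allI ballI)
  fix ks y assume y: "y \<in> Q"
  obtain G g where G: "open G" "y \<in> G" "smooth_on_euc g G" "\<forall>z\<in>G. f z = g z"
    using loc[OF y] by blast
  have "(pder ks f has_derivative frechet_derivative (pder ks g) (at y)) (at y)"
    using has_derivative_transform_within_open[OF smooth_on_euc_has_derivative[OF G(3,1,2)] G(1,2)]
      pder_cong_open[OF G(1), of f g] G(4) by auto
  then show "pder ks f differentiable at y" unfolding differentiable_def by blast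
qed

section \<open>Topologies defined by seminorms\<close>

definition sup_norm_on :: "'a::topological_space set \<Rightarrow> ('a \<Rightarrow> 'b::real_normed_vector) \<Rightarrow> real" where
  "sup_norm_on K g = Sup (insert 0 ((\<lambda>y. norm (g y)) ` K))"

lemma bdd_above_sup_norm_on:
  assumes "compact K" "continuous_on K g"
  shows "bdd_above (insert 0 ((\<lambda>y. norm (g y)) ` K))"
proof -
  obtain B where "\<forall>z\<in>g ` K. norm z \<le> B"
    using assms compact_continuous_image compact_imp_bounded bounded_iff by metis
  then show ?thesis unfolding bdd_above_def by (intro exI[of _ "max B 0"]) auto
qed

lemma norm_le_sup_norm_on:
  assumes "compact K" "continuous_on K g" "y \<in> K"
  shows "norm (g y) \<le> sup_norm_on K g"
  unfolding sup_norm_on_def using bdd_above_sup_norm_on[OF assms(1,2)] assms(3) by (intro cSup_upper) auto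

lemma sup_norm_on_nonneg:
  assumes "compact K" "continuous_on K g"
  shows "0 \<le> sup_norm_on K g"
  unfolding sup_norm_on_def using bdd_above_sup_norm_on[OF assms] by (intro cSup_upper) auto

lemma sup_norm_on_le:
  assumes "0 \<le> c" "\<And>y. y \<in> K \<Longrightarrow> norm (g y) \<le> c"
  shows "sup_norm_on K g \<le> c"
  unfolding sup_norm_on_def using assms by (intro cSup_least) auto

lemma sup_norm_on_singleton [simp]: "sup_norm_on {a} g = norm (g a)"
  unfolding sup_norm_on_def by (simp add: cSup_eq_Max)

definition seminorm_ball :: "('a \<Rightarrow> 'b::real_normed_vector) set \<Rightarrow> (('a \<Rightarrow> 'b) \<Rightarrow> real) set
    \<Rightarrow> ('a \<Rightarrow> 'b) \<Rightarrow> real \<Rightarrow> ('a \<Rightarrow> 'b) set" where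
  "seminorm_ball C P f e = {g \<in> C. \<forall>p\<in>P. p (\<lambda>x. g x - f x) < e}"

lemma seminorm_ball_anti_mono: "P \<subseteq> P' \<Longrightarrow> e' \<le> e \<Longrightarrow> seminorm_ball C P' f e' \<subseteq> seminorm_ball C P f e"
  unfolding seminorm_ball_def by fastforce

definition seminorm_open :: "('a \<Rightarrow> 'b::real_normed_vector) set \<Rightarrow> (('a \<Rightarrow> 'b) \<Rightarrow> real) set
    \<Rightarrow> ('a \<Rightarrow> 'b) set \<Rightarrow> bool" where
  "seminorm_open C SN S \<longleftrightarrow> S \<subseteq> C \<and>
     (\<forall>f\<in>S. \<exists>P e. finite P \<and> P \<subseteq> SN \<and> e > 0 \<and> seminorm_ball C P f e \<subseteq> S)"

lemma istopology_seminorm_open: "istopology (seminorm_open C SN)"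
  unfolding istopology_def
proof (intro conjI allI impI)
  fix S T assume S: "seminorm_open C SN S" and T: "seminorm_open C SN T"
  show "seminorm_open C SN (S \<inter> T)" unfolding seminorm_open_def
  proof (intro conjI ballI)
    show "S \<inter> T \<subseteq> C" using S unfolding seminorm_open_def by auto
    fix f assume f: "f \<in> S \<inter> T"
    obtain P1 e1 where "finite P1" "P1 \<subseteq> SN" "e1 > 0" "seminorm_ball C P1 f e1 \<subseteq> S"
      using S f unfolding seminorm_open_def by blast
    moreover obtain P2 e2 where "finite P2" "P2 \<subseteq> SN" "e2 > 0" "seminorm_ball C P2 f e2 \<subseteq> T"
      using T f unfolding seminorm_open_def by blast
    moreover have "seminorm_ball C (P1 \<union> P2) f (min e1 e2) \<subseteq> seminorm_ball C P1 f e1 \<inter> seminorm_ball C P2 f e2"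
      by (intro Int_greatest seminorm_ball_anti_mono) auto
    ultimately show "\<exists>P e. finite P \<and> P \<subseteq> SN \<and> e > 0 \<and> seminorm_ball C P f e \<subseteq> S \<inter> T"
      by (intro exI[of _ "P1 \<union> P2"] exI[of _ "min e1 e2"]) auto
  qed
next
  fix K assume "\<forall>S\<in>K. seminorm_open C SN S"
  then show "seminorm_open C SN (\<Union>K)"
    unfolding seminorm_open_def
    by (intro conjI ballI, blast) (metis UnionE Union_upper order_trans)
qed

definition seminorm_top :: "('a \<Rightarrow> 'b::real_normed_vector) set \<Rightarrow> (('a \<Rightarrow> 'b) \<Rightarrow> real) set
    \<Rightarrow> ('a \<Rightarrow> 'b) topology" where
  "seminorm_top C SN = topology (seminorm_open C SN)"

lemma openin_seminorm_top: "openin (seminorm_top C SN) S \<longleftrightarrow> seminorm_open C SN S"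
  unfolding seminorm_top_def by (simp add: topology_inverse'[OF istopology_seminorm_open])

lemma topspace_seminorm_top: "topspace (seminorm_top C SN) = C"
proof (rule antisym)
  have "seminorm_open C SN C"
    unfolding seminorm_open_def seminorm_ball_def by (auto intro!: exI[of _ "{}"] exI[of _ "1::real"])
  then show "C \<subseteq> topspace (seminorm_top C SN)" using openin_subset openin_seminorm_top by metis
  show "topspace (seminorm_top C SN) \<subseteq> C"
    using openin_topspace[of "seminorm_top C SN"] unfolding openin_seminorm_top seminorm_open_def by blast
qed

lemma dominated_by_seminorms_small:
  assumes "\<forall>r\<in>set R. fst r \<ge> 0" "e > (0::real)"
  obtains e' where "e' > 0" "\<And>w. (\<forall>r\<in>set R. snd r w < e') \<Longrightarrow> (\<Sum>r\<leftarrow>R. fst r * snd r w) \<le> e / 2"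
proof
  define c where "c = (\<Sum>r\<leftarrow>R. fst r)"
  have c0: "c \<ge> 0" unfolding c_def using assms(1) by (intro sum_list_nonneg) auto
  show "e / (2 * (1 + c)) > 0" using assms(2) c0 by simp
  fix w assume w: "\<forall>r\<in>set R. snd r w < e / (2 * (1 + c))"
  have "(\<Sum>r\<leftarrow>R. fst r * snd r w) \<le> (\<Sum>r\<leftarrow>R. fst r * (e / (2 * (1 + c))))"
    using assms(1) w by (intro sum_list_mono mult_left_mono) auto
  also have "\<dots> = e / 2 * (c / (1 + c))" unfolding c_def sum_list_mult_const by simp
  also have "\<dots> \<le> e / 2" using assms(2) c0 by (intro mult_left_le) auto
  finally show "(\<Sum>r\<leftarrow>R. fst r * snd r w) \<le> e / 2" .
qed

lemma dominated_by_seminorms_finite: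
  assumes dom: "\<And>p. p \<in> P \<Longrightarrow> \<exists>R. (\<forall>r\<in>set R. fst r \<ge> 0 \<and> snd r \<in> SN) \<and> (\<forall>w\<in>C. p (L w) \<le> (\<Sum>r\<leftarrow>R. fst r * snd r w))"
    and "finite P" "e > (0::real)"
  shows "\<exists>P' e'. finite P' \<and> P' \<subseteq> SN \<and> e' > 0 \<and> (\<forall>w\<in>C. (\<forall>q\<in>P'. q w < e') \<longrightarrow> (\<forall>p\<in>P. p (L w) < e))"
  using assms(2) dom
proof (induction P rule: finite_induct)
  case empty
  show ?case by (intro exI[of _ "{}"] exI[of _ "1::real"]) auto
next
  case (insert p P)
  have "\<exists>P' e'. finite P' \<and> P' \<subseteq> SN \<and> e' > 0 \<and> (\<forall>w\<in>C. (\<forall>q\<in>P'. q w < e') \<longrightarrow> (\<forall>p\<in>P. p (L w) < e))"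
    by (rule insert.IH) (rule insert.prems[OF insertI2])
  then obtain P1 e1 where P1: "finite P1" "P1 \<subseteq> SN" "e1 > 0"
    "\<forall>w\<in>C. (\<forall>q\<in>P1. q w < e1) \<longrightarrow> (\<forall>p\<in>P. p (L w) < e)"
    by blast
  obtain R where R: "\<forall>r\<in>set R. fst r \<ge> 0 \<and> snd r \<in> SN" "\<forall>w\<in>C. p (L w) \<le> (\<Sum>r\<leftarrow>R. fst r * snd r w)"
    using insert.prems[OF insertI1] by blast
  have R_nonneg: "\<forall>r\<in>set R. fst r \<ge> 0" using R(1) by blast
  obtain e2 where e2: "e2 > 0" "\<And>w. (\<forall>r\<in>set R. snd r w < e2) \<Longrightarrow> (\<Sum>r\<leftarrow>R. fst r * snd r w) \<le> e / 2"
    using dominated_by_seminorms_small[OF R_nonneg assms(3)] by blast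
  show ?case
  proof (intro exI conjI ballI impI)
    show "finite (P1 \<union> snd ` set R)" "P1 \<union> snd ` set R \<subseteq> SN" "min e1 e2 > 0"
      using P1 R(1) e2(1) by auto
    fix w p' assume w: "w \<in> C" "\<forall>q\<in>P1 \<union> snd ` set R. q w < min e1 e2" and p': "p' \<in> insert p P"
    have "p (L w) \<le> (\<Sum>r\<leftarrow>R. fst r * snd r w)" using R(2) w(1) by blast
    also have "\<dots> \<le> e / 2" using w(2) by (intro e2(2)) auto
    finally have "p (L w) < e" using assms(3) by linarith
    moreover have "\<forall>p\<in>P. p (L w) < e" using P1(4) w by auto
    ultimately show "p' (L w) < e" using p' by blast
  qed
qed

lemma continuous_map_seminorm_top:
  assumes maps: "\<forall>v\<in>C1. L v \<in> C2"
    and diff_closed: "\<forall>g\<in>C1. \<forall>v\<in>C1. (\<lambda>x. g x - v x) \<in> C1"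
    and diff: "\<forall>g\<in>C1. \<forall>v\<in>C1. L (\<lambda>x. g x - v x) = (\<lambda>x. L g x - L v x)"
    and dom: "\<forall>p\<in>SN2. \<exists>R. (\<forall>r\<in>set R. fst r \<ge> 0 \<and> snd r \<in> SN1) \<and> (\<forall>w\<in>C1. p (L w) \<le> (\<Sum>r\<leftarrow>R. fst r * snd r w))"
  shows "continuous_map (seminorm_top C1 SN1) (seminorm_top C2 SN2) L"
  unfolding continuous_map topspace_seminorm_top
proof (intro conjI allI impI)
  show "L ` C1 \<subseteq> C2" using maps by auto
  fix O' assume "openin (seminorm_top C2 SN2) O'"
  then have O': "seminorm_open C2 SN2 O'" by (simp add: openin_seminorm_top)
  show "openin (seminorm_top C1 SN1) {x \<in> C1. L x \<in> O'}"
    unfolding openin_seminorm_top seminorm_open_def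
  proof (intro conjI ballI)
    fix v assume v: "v \<in> {x \<in> C1. L x \<in> O'}"
    then obtain P e where P: "finite P" "P \<subseteq> SN2" "e > 0" "seminorm_ball C2 P (L v) e \<subseteq> O'"
      using O' unfolding seminorm_open_def by blast
    have dom_P: "\<exists>R. (\<forall>r\<in>set R. fst r \<ge> 0 \<and> snd r \<in> SN1) \<and> (\<forall>w\<in>C1. p (L w) \<le> (\<Sum>r\<leftarrow>R. fst r * snd r w))"
      if "p \<in> P" for p
      using dom P(2) that by blast
    have "\<exists>P' e'. finite P' \<and> P' \<subseteq> SN1 \<and> e' > 0 \<and> (\<forall>w\<in>C1. (\<forall>q\<in>P'. q w < e') \<longrightarrow> (\<forall>p\<in>P. p (L w) < e))"
      by (rule dominated_by_seminorms_finite[OF _ P(1,3)]) (fact dom_P)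
    then obtain P' e' where P': "finite P'" "P' \<subseteq> SN1" "e' > 0"
      "\<forall>w\<in>C1. (\<forall>q\<in>P'. q w < e') \<longrightarrow> (\<forall>p\<in>P. p (L w) < e)"
      by blast
    have "seminorm_ball C1 P' v e' \<subseteq> {x \<in> C1. L x \<in> O'}"
    proof
      fix g assume "g \<in> seminorm_ball C1 P' v e'"
      then have g: "g \<in> C1" "\<forall>q\<in>P'. q (\<lambda>x. g x - v x) < e'" unfolding seminorm_ball_def by auto
      have "(\<lambda>x. g x - v x) \<in> C1" "L (\<lambda>x. g x - v x) = (\<lambda>x. L g x - L v x)"
        using diff_closed diff g(1) v by auto
      then have "\<forall>p\<in>P. p (\<lambda>x. L g x - L v x) < e"
        using P'(4)[rule_format, of "\<lambda>x. g x - v x"] g(2) by simp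
      then have "L g \<in> seminorm_ball C2 P (L v) e"
        using g(1) maps unfolding seminorm_ball_def by simp
      then show "g \<in> {x \<in> C1. L x \<in> O'}"
        using P(4) g(1) by blast
    qed
    then show "\<exists>P e. finite P \<and> P \<subseteq> SN1 \<and> e > 0 \<and> seminorm_ball C1 P v e \<subseteq> {x \<in> C1. L x \<in> O'}"
      using P' by blast
  qed auto
qed

lemma norm_sum_list_le: "norm (\<Sum>p\<leftarrow>P. (f p :: 'b::real_normed_vector)) \<le> (\<Sum>p\<leftarrow>P. norm (f p))"
  by (induction P) (auto intro: order_trans[OF norm_triangle_ineq])

lemma continuous_on_pder: "smooth_on_euc f S \<Longrightarrow> continuous_on S (pder ks f)"
  unfolding smooth_on_euc_def using differentiable_imp_continuous_on by blast

lemma norm_pder_scaleR_le: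
  fixes r :: "real^'d::finite \<Rightarrow> real" and F :: "real^'d \<Rightarrow> 'b::real_normed_vector"
  assumes A: "open A" and r: "smooth_on_euc r A" and F: "smooth_on_euc F A"
    and K: "compact K" "K \<subseteq> A" and y: "y \<in> K"
  shows "norm (pder ks (\<lambda>x. r x *\<^sub>R F x) y)
    \<le> (\<Sum>q\<leftarrow>leibniz_splits ks. sup_norm_on K (pder (fst q) r) * sup_norm_on K (pder (snd q) F))"
proof -
  have cont: "continuous_on K (pder ks r)" "continuous_on K (pder ks F)" for ks
    using continuous_on_pder[OF r] continuous_on_pder[OF F] K(2) continuous_on_subset by blast+
  have "norm (pder ks (\<lambda>x. r x *\<^sub>R F x) y) \<le> (\<Sum>q\<leftarrow>leibniz_splits ks. norm (pder (fst q) r y *\<^sub>R pder (snd q) F y))"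
    unfolding pder_scaleR[OF A r F subsetD[OF K(2) y]] split_def by (rule norm_sum_list_le)
  also have "\<dots> \<le> (\<Sum>q\<leftarrow>leibniz_splits ks. sup_norm_on K (pder (fst q) r) * sup_norm_on K (pder (snd q) F))"
    using norm_le_sup_norm_on[OF K(1) cont(1) y] norm_le_sup_norm_on[OF K(1) cont(2) y]
      sup_norm_on_nonneg[OF K(1) cont(1)]
    by (intro sum_list_mono) (simp add: mult_mono)
  finally show ?thesis .
qed

section \<open>Locally convex direct sums\<close>

definition lincomb_closed :: "('m \<Rightarrow> 'v::real_vector) set \<Rightarrow> bool" where
  "lincomb_closed C \<longleftrightarrow> (\<forall>f\<in>C. \<forall>g\<in>C. \<forall>a b. (\<lambda>x. a *\<^sub>R f x + b *\<^sub>R g x) \<in> C)"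

definition dsum_summands :: "'i set \<Rightarrow> ('i \<Rightarrow> ('m \<Rightarrow> 'v::real_vector) set) \<Rightarrow> ('i \<Rightarrow> ('m \<Rightarrow> 'v) topology) \<Rightarrow> bool" where
  "dsum_summands I C T \<longleftrightarrow> (\<forall>i\<in>I. (\<lambda>x. 0) \<in> C i \<and> lincomb_closed (C i) \<and> topspace (T i) = C i)"

lemma dsum_carrier_lincomb:
  assumes "\<forall>i\<in>I. lincomb_closed (C i)" "F \<in> dsum_carrier I C" "G \<in> dsum_carrier I C"
  shows "(\<lambda>i x. a *\<^sub>R F i x + b *\<^sub>R G i x) \<in> dsum_carrier I C"
proof -
  have "{i\<in>I. (\<lambda>x. a *\<^sub>R F i x + b *\<^sub>R G i x) \<noteq> (\<lambda>x. 0)} \<subseteq> {i\<in>I. F i \<noteq> (\<lambda>x. 0)} \<union> {i\<in>I. G i \<noteq> (\<lambda>x. 0)}"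
    by auto
  then show ?thesis
    using assms unfolding dsum_carrier_def lincomb_closed_def by (auto intro: finite_subset)
qed

lemma dsum_carrier_add:
  "\<forall>i\<in>I. lincomb_closed (C i) \<Longrightarrow> F \<in> dsum_carrier I C \<Longrightarrow> G \<in> dsum_carrier I C
    \<Longrightarrow> (\<lambda>i x. F i x + G i x) \<in> dsum_carrier I C"
  using dsum_carrier_lincomb[of I C F G 1 1] by simp

lemma inj_at_in_dsum_carrier:
  assumes "\<forall>j\<in>I. (\<lambda>x. 0) \<in> C j" "i \<in> I" "v \<in> C i"
  shows "inj_at i v \<in> dsum_carrier I C"
proof -
  have "{j\<in>I. inj_at i v j \<noteq> (\<lambda>x. 0)} \<subseteq> {i}" unfolding inj_at_def by auto
  then show ?thesis
    using assms unfolding dsum_carrier_def inj_at_def by (auto intro: finite_subset)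
qed

lemma inj_at_zero [simp]: "inj_at i (\<lambda>x. 0) = (\<lambda>j x. 0)"
  unfolding inj_at_def by auto

lemma abs_convex_Int: "abs_convex A \<Longrightarrow> abs_convex B \<Longrightarrow> abs_convex (A \<inter> B)"
  unfolding abs_convex_def by blast

lemma abs_convex_dsum_carrier: "\<forall>i\<in>I. lincomb_closed (C i) \<Longrightarrow> abs_convex (dsum_carrier I C)"
  unfolding abs_convex_def using dsum_carrier_lincomb by blast

lemma abs_convex_sum:
  fixes W :: "('i \<Rightarrow> 'm \<Rightarrow> 'v::real_vector) set"
  assumes W: "abs_convex W" and zero: "(\<lambda>i x. 0) \<in> W"
    and "finite A" "\<forall>a\<in>A. w a \<in> W" "(\<Sum>a\<in>A. \<bar>c a\<bar>) \<le> 1"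
  shows "(\<lambda>i x. \<Sum>a\<in>A. c a *\<^sub>R w a i x) \<in> W"
  using assms(3-5)
proof (induction A arbitrary: c rule: finite_induct)
  case empty
  then show ?case using zero by simp
next
  case (insert a A)
  define t where "t = (\<Sum>b\<in>A. \<bar>c b\<bar>)"
  \<comment> \<open>if \<open>t = 0\<close> then \<open>c b / t = 0\<close>, harmless since all \<open>c b\<close> vanish\<close>
  have "(\<Sum>b\<in>A. \<bar>c b / t\<bar>) \<le> 1"
    by (cases "t = 0") (simp_all add: t_def sum_divide_distrib[symmetric] sum_nonneg)
  then have "(\<lambda>i x. \<Sum>b\<in>A. (c b / t) *\<^sub>R w b i x) \<in> W"
    using insert by (intro insert.IH) auto
  then have "(\<lambda>i x. c a *\<^sub>R w a i x + t *\<^sub>R (\<Sum>b\<in>A. (c b / t) *\<^sub>R w b i x)) \<in> W"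
    using W insert unfolding abs_convex_def t_def by (simp add: sum_nonneg)
  moreover have "t *\<^sub>R (\<Sum>b\<in>A. (c b / t) *\<^sub>R w b i x) = (\<Sum>b\<in>A. c b *\<^sub>R w b i x)" for i x
  proof (cases "t = 0")
    case True
    then have "\<forall>b\<in>A. c b = 0" using insert(1) by (simp add: t_def sum_nonneg_eq_0_iff)
    then show ?thesis using True by simp
  qed (simp add: scaleR_sum_right)
  ultimately show ?case using insert(1,2) by simp
qed

definition dsum_zero_nbhd :: "'i set \<Rightarrow> ('i \<Rightarrow> ('m \<Rightarrow> 'v::real_vector) set) \<Rightarrow> ('i \<Rightarrow> ('m \<Rightarrow> 'v) topology)
    \<Rightarrow> ('i \<Rightarrow> 'm \<Rightarrow> 'v) set \<Rightarrow> bool" where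
  "dsum_zero_nbhd I C T W \<longleftrightarrow> (\<forall>i\<in>I. \<exists>N. openin (T i) N \<and> (\<lambda>x. 0) \<in> N \<and> N \<subseteq> {v \<in> C i. inj_at i v \<in> W})"

definition dsum_translate :: "('i \<Rightarrow> 'm \<Rightarrow> 'v::real_vector) \<Rightarrow> ('i \<Rightarrow> 'm \<Rightarrow> 'v) set \<Rightarrow> ('i \<Rightarrow> 'm \<Rightarrow> 'v) set" where
  "dsum_translate F W = {(\<lambda>i x. F i x + G i x) | G. G \<in> W}"

definition dsum_open :: "'i set \<Rightarrow> ('i \<Rightarrow> ('m \<Rightarrow> 'v::real_vector) set) \<Rightarrow> ('i \<Rightarrow> ('m \<Rightarrow> 'v) topology)
    \<Rightarrow> ('i \<Rightarrow> 'm \<Rightarrow> 'v) set \<Rightarrow> bool" where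
  "dsum_open I C T S \<longleftrightarrow> S \<subseteq> dsum_carrier I C \<and>
     (\<forall>F\<in>S. \<exists>W. W \<subseteq> dsum_carrier I C \<and> abs_convex W \<and> dsum_zero_nbhd I C T W \<and> dsum_translate F W \<subseteq> S)"

lemma dsum_zero_nbhd_Int:
  assumes "dsum_zero_nbhd I C T W1" "dsum_zero_nbhd I C T W2"
  shows "dsum_zero_nbhd I C T (W1 \<inter> W2)"
  unfolding dsum_zero_nbhd_def
proof
  fix i assume "i \<in> I"
  then obtain N1 N2 where "openin (T i) N1" "(\<lambda>x. 0) \<in> N1" "N1 \<subseteq> {v \<in> C i. inj_at i v \<in> W1}"
    "openin (T i) N2" "(\<lambda>x. 0) \<in> N2" "N2 \<subseteq> {v \<in> C i. inj_at i v \<in> W2}"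
    using assms unfolding dsum_zero_nbhd_def by meson
  then show "\<exists>N. openin (T i) N \<and> (\<lambda>x. 0) \<in> N \<and> N \<subseteq> {v \<in> C i. inj_at i v \<in> W1 \<inter> W2}"
    by (intro exI[of _ "N1 \<inter> N2"]) auto
qed

lemma dsum_zero_nbhd_zero:
  assumes "dsum_zero_nbhd I C T W" "i \<in> I"
  shows "(\<lambda>j x. 0) \<in> W"
proof -
  obtain N where "(\<lambda>x. 0) \<in> N" "N \<subseteq> {v \<in> C i. inj_at i v \<in> W}"
    using assms unfolding dsum_zero_nbhd_def by blast
  then have "inj_at i (\<lambda>x. 0) \<in> W" by blast
  then show ?thesis by simp
qed

lemma istopology_dsum_open: "istopology (dsum_open I C T)"
  unfolding istopology_def
proof (intro conjI allI impI)
  fix S S' assume S: "dsum_open I C T S" and S': "dsum_open I C T S'"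
  show "dsum_open I C T (S \<inter> S')" unfolding dsum_open_def
  proof (intro conjI ballI)
    show "S \<inter> S' \<subseteq> dsum_carrier I C" using S unfolding dsum_open_def by auto
    fix F assume F: "F \<in> S \<inter> S'"
    obtain W1 where "W1 \<subseteq> dsum_carrier I C" "abs_convex W1" "dsum_zero_nbhd I C T W1" "dsum_translate F W1 \<subseteq> S"
      using S F unfolding dsum_open_def by blast
    moreover obtain W2 where "abs_convex W2" "dsum_zero_nbhd I C T W2" "dsum_translate F W2 \<subseteq> S'"
      using S' F unfolding dsum_open_def by blast
    moreover have "dsum_translate F (W1 \<inter> W2) \<subseteq> dsum_translate F W1 \<inter> dsum_translate F W2"
      unfolding dsum_translate_def by blast
    ultimately show "\<exists>W. W \<subseteq> dsum_carrier I C \<and> abs_convex W \<and> dsum_zero_nbhd I C T W \<and> dsum_translate F W \<subseteq> S \<inter> S'"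
      by (intro exI[of _ "W1 \<inter> W2"]) (auto intro: abs_convex_Int dsum_zero_nbhd_Int)
  qed
next
  fix K assume K: "\<forall>S\<in>K. dsum_open I C T S"
  show "dsum_open I C T (\<Union>K)"
    unfolding dsum_open_def
  proof (intro conjI ballI)
    show "\<Union>K \<subseteq> dsum_carrier I C" using K unfolding dsum_open_def by blast
    fix F assume "F \<in> \<Union>K"
    then obtain S where S: "S \<in> K" "F \<in> S" by blast
    then obtain W where "W \<subseteq> dsum_carrier I C" "abs_convex W" "dsum_zero_nbhd I C T W" "dsum_translate F W \<subseteq> S"
      using K unfolding dsum_open_def by blast
    then show "\<exists>W. W \<subseteq> dsum_carrier I C \<and> abs_convex W \<and> dsum_zero_nbhd I C T W \<and> dsum_translate F W \<subseteq> \<Union>K"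
      using S(1) by blast
  qed
qed

lemma openin_dsum_top: "openin (dsum_top I C T) S \<longleftrightarrow> dsum_open I C T S"
proof -
  have "dsum_top I C T = topology (dsum_open I C T)"
    unfolding dsum_top_def dsum_open_def dsum_zero_nbhd_def dsum_translate_def ..
  then show ?thesis by (simp add: topology_inverse'[OF istopology_dsum_open])
qed

lemma topspace_dsum_top:
  assumes "dsum_summands I C T"
  shows "topspace (dsum_top I C T) = dsum_carrier I C"
proof (rule antisym)
  have lin: "\<forall>i\<in>I. lincomb_closed (C i)" and zero: "\<forall>i\<in>I. (\<lambda>x. 0) \<in> C i"
    using assms unfolding dsum_summands_def by auto
  have "dsum_zero_nbhd I C T (dsum_carrier I C)"
    unfolding dsum_zero_nbhd_def
  proof
    fix i assume i: "i \<in> I"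
    then have "openin (T i) (C i)" using assms openin_topspace unfolding dsum_summands_def by metis
    moreover have "C i \<subseteq> {v \<in> C i. inj_at i v \<in> dsum_carrier I C}"
      using inj_at_in_dsum_carrier[OF zero i] by auto
    ultimately show "\<exists>N. openin (T i) N \<and> (\<lambda>x. 0) \<in> N \<and> N \<subseteq> {v \<in> C i. inj_at i v \<in> dsum_carrier I C}"
      using zero i by blast
  qed
  moreover have "dsum_translate F (dsum_carrier I C) \<subseteq> dsum_carrier I C" if "F \<in> dsum_carrier I C" for F
    unfolding dsum_translate_def using dsum_carrier_add[OF lin that] by blast
  ultimately have "dsum_open I C T (dsum_carrier I C)"
    unfolding dsum_open_def using abs_convex_dsum_carrier[OF lin] by blast
  then show "dsum_carrier I C \<subseteq> topspace (dsum_top I C T)"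
    using openin_subset openin_dsum_top by metis
  show "topspace (dsum_top I C T) \<subseteq> dsum_carrier I C"
    using openin_topspace[of "dsum_top I C T"] unfolding openin_dsum_top dsum_open_def by blast
qed

lemma continuous_map_dsum_top_linear:
  fixes L :: "('i \<Rightarrow> 'm \<Rightarrow> 'v::real_vector) \<Rightarrow> ('j \<Rightarrow> 'n \<Rightarrow> 'w::real_vector)"
  assumes summands: "dsum_summands I C T" "dsum_summands J C' T'"
    and maps: "\<And>F. F \<in> dsum_carrier I C \<Longrightarrow> L F \<in> dsum_carrier J C'"
    and linear: "\<And>F G a b. F \<in> dsum_carrier I C \<Longrightarrow> G \<in> dsum_carrier I C
      \<Longrightarrow> L (\<lambda>i x. a *\<^sub>R F i x + b *\<^sub>R G i x) = (\<lambda>j y. a *\<^sub>R L F j y + b *\<^sub>R L G j y)"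
    and summand_nbhd: "\<And>i W. i \<in> I \<Longrightarrow> W \<subseteq> dsum_carrier J C' \<Longrightarrow> abs_convex W \<Longrightarrow> dsum_zero_nbhd J C' T' W
      \<Longrightarrow> \<exists>N. openin (T i) N \<and> (\<lambda>x. 0) \<in> N \<and> N \<subseteq> {v \<in> C i. L (inj_at i v) \<in> W}"
  shows "continuous_map (dsum_top I C T) (dsum_top J C' T') L"
  unfolding continuous_map topspace_dsum_top[OF summands(1)] topspace_dsum_top[OF summands(2)]
proof (intro conjI allI impI)
  let ?D = "dsum_carrier I C" and ?E = "dsum_carrier J C'"
  have lin: "\<forall>i\<in>I. lincomb_closed (C i)" and zero: "\<forall>i\<in>I. (\<lambda>x. 0) \<in> C i"
    using summands(1) unfolding dsum_summands_def by auto
  show "L ` ?D \<subseteq> ?E" using maps by blast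
  fix O' assume "openin (dsum_top J C' T') O'"
  then have O': "dsum_open J C' T' O'" by (simp add: openin_dsum_top)
  show "openin (dsum_top I C T) {F \<in> ?D. L F \<in> O'}"
    unfolding openin_dsum_top dsum_open_def
  proof (intro conjI ballI)
    fix F0 assume F0: "F0 \<in> {F \<in> ?D. L F \<in> O'}"
    then obtain W where W: "W \<subseteq> ?E" "abs_convex W" "dsum_zero_nbhd J C' T' W" "dsum_translate (L F0) W \<subseteq> O'"
      using O' unfolding dsum_open_def by blast
    define W' where "W' = {H \<in> ?D. L H \<in> W}"
    have W'_sub: "W' \<subseteq> ?D" unfolding W'_def by blast
    have "abs_convex W'"
      using W(2) dsum_carrier_lincomb[OF lin] linear unfolding abs_convex_def W'_def by auto
    moreover have "dsum_zero_nbhd I C T W'"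
      unfolding dsum_zero_nbhd_def
    proof
      fix i assume i: "i \<in> I"
      obtain N where "openin (T i) N" "(\<lambda>x. 0) \<in> N" "N \<subseteq> {v \<in> C i. L (inj_at i v) \<in> W}"
        using summand_nbhd[OF i W(1-3)] by blast
      moreover have "inj_at i v \<in> ?D" if "v \<in> C i" for v
        using inj_at_in_dsum_carrier[OF zero i that] by blast
      ultimately show "\<exists>N. openin (T i) N \<and> (\<lambda>x. 0) \<in> N \<and> N \<subseteq> {v \<in> C i. inj_at i v \<in> W'}"
        unfolding W'_def by blast
    qed
    moreover have "dsum_translate F0 W' \<subseteq> {F \<in> ?D. L F \<in> O'}"
    proof
      fix K assume "K \<in> dsum_translate F0 W'"
      then obtain H where K: "K = (\<lambda>i x. F0 i x + H i x)" and H: "H \<in> ?D" "L H \<in> W"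
        unfolding dsum_translate_def W'_def by blast
      have "L K = (\<lambda>j y. L F0 j y + L H j y)"
        using linear[of F0 H 1 1] F0 H(1) unfolding K by simp
      then have "L K \<in> O'" using W(4) H(2) unfolding dsum_translate_def by blast
      then show "K \<in> {F \<in> ?D. L F \<in> O'}" using dsum_carrier_add[OF lin] F0 H(1) unfolding K by blast
    qed
    ultimately show "\<exists>W. W \<subseteq> ?D \<and> abs_convex W \<and> dsum_zero_nbhd I C T W \<and> dsum_translate F0 W \<subseteq> {F \<in> ?D. L F \<in> O'}"
      using W'_sub by blast
  qed blast
qed

lemma abs_convex_dsum_eval_diff_ball:
  fixes C :: "'i \<Rightarrow> ('m \<Rightarrow> 'v::real_normed_vector) set"
  assumes "\<forall>i\<in>I. lincomb_closed (C i)"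
  shows "abs_convex {H \<in> dsum_carrier I C. norm (H j x - H i x) < \<delta>}"
  unfolding abs_convex_def
proof (intro ballI allI impI)
  fix H1 H2 and a b :: real
  assume H1: "H1 \<in> {H \<in> dsum_carrier I C. norm (H j x - H i x) < \<delta>}"
    and H2: "H2 \<in> {H \<in> dsum_carrier I C. norm (H j x - H i x) < \<delta>}" and ab: "\<bar>a\<bar> + \<bar>b\<bar> \<le> 1"
  define n1 where "n1 = norm (H1 j x - H1 i x)"
  define n2 where "n2 = norm (H2 j x - H2 i x)"
  have "norm ((a *\<^sub>R H1 j x + b *\<^sub>R H2 j x) - (a *\<^sub>R H1 i x + b *\<^sub>R H2 i x))
      = norm (a *\<^sub>R (H1 j x - H1 i x) + b *\<^sub>R (H2 j x - H2 i x))" by (simp add: algebra_simps)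
  also have "\<dots> \<le> \<bar>a\<bar> * n1 + \<bar>b\<bar> * n2"
    unfolding n1_def n2_def by (metis norm_scaleR norm_triangle_ineq order_trans order_refl)
  also have "\<dots> \<le> (\<bar>a\<bar> + \<bar>b\<bar>) * max n1 n2"
    by (simp add: distrib_right add_mono mult_left_mono)
  also have "\<dots> \<le> max n1 n2"
    using ab by (intro mult_left_le_one_le) (auto simp: n1_def n2_def le_max_iff_disj)
  also have "\<dots> < \<delta>" using H1 H2 unfolding n1_def n2_def by simp
  finally show "(\<lambda>i x. a *\<^sub>R H1 i x + b *\<^sub>R H2 i x) \<in> {H \<in> dsum_carrier I C. norm (H j x - H i x) < \<delta>}"
    using dsum_carrier_lincomb[OF assms] H1 H2 by simp
qed

lemma dsum_zero_nbhd_eval_diff_ball: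
  fixes C :: "'i \<Rightarrow> ('m \<Rightarrow> 'v::real_normed_vector) set"
  assumes summands: "dsum_summands I C T" and "i \<noteq> j" "\<delta> > 0"
    and eval_open: "\<And>k. k \<in> I \<Longrightarrow> k \<in> {i, j} \<Longrightarrow> openin (T k) {v \<in> C k. norm (v x) < \<delta>}"
  shows "dsum_zero_nbhd I C T {H \<in> dsum_carrier I C. norm (H j x - H i x) < \<delta>}"
  unfolding dsum_zero_nbhd_def
proof
  fix k assume k: "k \<in> I"
  have zero: "\<forall>i\<in>I. (\<lambda>x. 0) \<in> C i" and top: "topspace (T k) = C k"
    using summands k unfolding dsum_summands_def by auto
  have inj: "inj_at k v \<in> dsum_carrier I C" if "v \<in> C k" for v
    using inj_at_in_dsum_carrier[OF zero k that] by blast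
  show "\<exists>N. openin (T k) N \<and> (\<lambda>x. 0) \<in> N \<and> N \<subseteq> {v \<in> C k. inj_at k v \<in> {H \<in> dsum_carrier I C. norm (H j x - H i x) < \<delta>}}"
  proof (cases "k \<in> {i, j}")
    case True
    then have eval: "norm (inj_at k v j x - inj_at k v i x) = norm (v x)" for v
      using \<open>i \<noteq> j\<close> by (auto simp: inj_at_def norm_minus_commute)
    show ?thesis
      using eval_open[OF k True] zero k \<open>\<delta> > 0\<close> inj
      by (intro exI[of _ "{v \<in> C k. norm (v x) < \<delta>}"]) (auto simp: eval)
  next
    case False
    then have eval: "norm (inj_at k v j x - inj_at k v i x) = 0" for v
      by (auto simp: inj_at_def)
    show ?thesis
      using openin_topspace[of "T k"] top zero k \<open>\<delta> > 0\<close> inj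
      by (intro exI[of _ "C k"]) (auto simp: eval)
  qed
qed

lemma closedin_dsum_top_compatible:
  fixes C :: "'i \<Rightarrow> ('m \<Rightarrow> 'v::real_normed_vector) set"
  assumes summands: "dsum_summands I C T"
    and eval_open: "\<And>k x \<delta>. k \<in> I \<Longrightarrow> x \<in> A k \<Longrightarrow> openin (T k) {v \<in> C k. norm (v x) < \<delta>}"
  shows "closedin (dsum_top I C T) {G \<in> dsum_carrier I C. \<forall>i\<in>I. \<forall>j\<in>I. \<forall>x\<in>A i \<inter> A j. G j x = G i x}"
    (is "closedin _ ?S")
proof -
  let ?E = "dsum_carrier I C"
  have lin: "\<forall>i\<in>I. lincomb_closed (C i)" using summands unfolding dsum_summands_def by auto
  have "dsum_open I C T (?E - ?S)"
    unfolding dsum_open_def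
  proof (intro conjI ballI)
    fix G assume G: "G \<in> ?E - ?S"
    then obtain i j x where ij: "i \<in> I" "j \<in> I" and x: "x \<in> A i" "x \<in> A j" and ne: "G j x \<noteq> G i x"
      by blast
    define \<delta> where "\<delta> = norm (G j x - G i x)"
    define W where "W = {H \<in> ?E. norm (H j x - H i x) < \<delta>}"
    have "i \<noteq> j" "\<delta> > 0" using ne unfolding \<delta>_def by auto
    then have "dsum_zero_nbhd I C T W"
      unfolding W_def using x by (intro dsum_zero_nbhd_eval_diff_ball[OF summands] eval_open) auto
    moreover have "dsum_translate G W \<subseteq> ?E - ?S"
    proof
      fix K assume "K \<in> dsum_translate G W"
      then obtain H where K: "K = (\<lambda>i x. G i x + H i x)" and H: "H \<in> ?E" "norm (H j x - H i x) < \<delta>"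
        unfolding dsum_translate_def W_def by blast
      have "K j x \<noteq> K i x"
      proof
        assume "K j x = K i x"
        then have "G j x - G i x = - (H j x - H i x)" unfolding K by (simp add: algebra_simps)
        then show False using H(2) unfolding \<delta>_def by (simp add: norm_minus_commute)
      qed
      then show "K \<in> ?E - ?S" using dsum_carrier_add[OF lin] G H(1) ij x unfolding K by auto
    qed
    moreover have "W \<subseteq> ?E" "abs_convex W"
      unfolding W_def using abs_convex_dsum_eval_diff_ball[OF lin] by auto
    ultimately show "\<exists>W. W \<subseteq> ?E \<and> abs_convex W \<and> dsum_zero_nbhd I C T W \<and> dsum_translate G W \<subseteq> ?E - ?S"
      by blast
  qed blast
  then show ?thesis
    unfolding closedin_def topspace_dsum_top[OF summands] openin_dsum_top by blast
qed

section \<open>Smooth functions on the manifold\<close>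

lemma finite_indices_meeting_compactin:
  assumes loc_fin: "\<forall>x\<in>topspace M. \<exists>N. openin M N \<and> x \<in> N \<and> finite {i\<in>I. U i \<inter> N \<noteq> {}}"
    and K: "compactin M K"
  shows "finite {i\<in>I. U i \<inter> K \<noteq> {}}"
proof -
  obtain N where N: "\<forall>x\<in>topspace M. openin M (N x) \<and> x \<in> N x \<and> finite {i\<in>I. U i \<inter> N x \<noteq> {}}"
    using loc_fin by metis
  have K_sub: "K \<subseteq> topspace M" using K compactin_subset_topspace by blast
  then obtain \<F> where "finite \<F>" "\<F> \<subseteq> N ` K" "K \<subseteq> \<Union>\<F>"
    using K N unfolding compactin_def by (elim conjE allE[of _ "N ` K"]) auto
  then obtain X where X: "finite X" "X \<subseteq> K" "K \<subseteq> (\<Union>x\<in>X. N x)"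
    using finite_subset_image by metis
  have "{i\<in>I. U i \<inter> K \<noteq> {}} \<subseteq> (\<Union>x\<in>X. {i\<in>I. U i \<inter> N x \<noteq> {}})"
    using X(3) by blast
  moreover have "finite (\<Union>x\<in>X. {i\<in>I. U i \<inter> N x \<noteq> {}})"
    using X(1,2) N K_sub by blast
  ultimately show ?thesis by (rule finite_subset)
qed

lemma Cinf_top_eq_seminorm_top: "Cinf_top I U \<phi> W = seminorm_top (Cinf_space I U \<phi> W) (Cinf_seminorms I U \<phi> W)"
  unfolding Cinf_top_def seminorm_top_def seminorm_open_def seminorm_ball_def ..

lemma topspace_Cinf_top [simp]: "topspace (Cinf_top I U \<phi> W) = Cinf_space I U \<phi> W"
  by (simp add: Cinf_top_eq_seminorm_top topspace_seminorm_top)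

locale atlas_pou =
  fixes M :: "'m topology" and I :: "'i set"
    and U V :: "'i \<Rightarrow> 'm set" and \<phi> :: "'i \<Rightarrow> 'm \<Rightarrow> real^'d::finite"
    and \<rho> :: "'i \<Rightarrow> 'm \<Rightarrow> real"
  assumes atlas: "smooth_atlas M I U \<phi>"
    and chart_onto: "\<forall>i\<in>I. \<phi> i ` U i = UNIV"
    and loc_fin: "\<forall>x\<in>topspace M. \<exists>N. openin M N \<and> x \<in> N \<and> finite {i\<in>I. U i \<inter> N \<noteq> {}}"
    and rel_compact: "\<forall>i\<in>I. compactin M (M closure_of (U i))"
    and V_open: "\<forall>i\<in>I. openin M (V i) \<and> M closure_of (V i) \<subseteq> U i"
    and pou_smooth: "\<forall>i\<in>I. mf_smooth I U \<phi> (topspace M) (\<rho> i)"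
    and pou_supp: "\<forall>i\<in>I. M closure_of {x\<in>topspace M. \<rho> i x \<noteq> 0} \<subseteq> V i"
begin

definition chart_inv :: "'i \<Rightarrow> real^'d \<Rightarrow> 'm" where
  "chart_inv j = inv_into (U j) (\<phi> j)"

lemma openin_U: "i \<in> I \<Longrightarrow> openin M (U i)"
  using atlas unfolding smooth_atlas_def by blast

lemma openin_V: "i \<in> I \<Longrightarrow> openin M (V i)"
  using V_open by blast

lemma V_subset_U: "i \<in> I \<Longrightarrow> V i \<subseteq> U i"
  using V_open closure_of_subset[OF openin_subset[OF openin_V]] by blast

lemma chart_homeomorphic_map: "j \<in> I \<Longrightarrow> homeomorphic_map (subtopology M (U j)) euclidean (\<phi> j)"
  using atlas chart_onto unfolding smooth_atlas_def by fastforce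

lemma chart_inv_in_U: "j \<in> I \<Longrightarrow> chart_inv j y \<in> U j"
  unfolding chart_inv_def using chart_onto by (intro inv_into_into) auto

lemma chart_inv_in_topspace: "j \<in> I \<Longrightarrow> chart_inv j y \<in> topspace M"
  using chart_inv_in_U openin_subset[OF openin_U] by blast

lemma chart_chart_inv: "j \<in> I \<Longrightarrow> \<phi> j (chart_inv j y) = y"
  unfolding chart_inv_def using chart_onto by (intro f_inv_into_f) auto

lemma chart_inv_chart:
  assumes j: "j \<in> I" and x: "x \<in> U j"
  shows "chart_inv j (\<phi> j x) = x"
proof -
  have "inj_on (\<phi> j) (topspace (subtopology M (U j)))"
    using homeomorphic_imp_injective_map[OF chart_homeomorphic_map[OF j]] .
  then have "inj_on (\<phi> j) (U j)" using openin_subset[OF openin_U[OF j]] by (simp add: Int_absorb1)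
  then show ?thesis unfolding chart_inv_def using x by simp
qed

lemma chart_image_eq: "j \<in> I \<Longrightarrow> \<phi> j ` (U j \<inter> A) = {y. chart_inv j y \<in> A}"
  using chart_inv_chart chart_chart_inv chart_inv_in_U by (auto intro!: image_eqI[where x="chart_inv j _"])

lemma open_chart_preimage: assumes "j \<in> I" "openin M A" shows "open {y. chart_inv j y \<in> A}"
proof -
  have "openin (subtopology M (U j)) (U j \<inter> A)" using openin_subtopology_Int2[OF assms(2)] .
  then have "open (\<phi> j ` (U j \<inter> A))"
    using homeomorphic_imp_open_map[OF chart_homeomorphic_map[OF assms(1)]] unfolding open_map_def by simp
  then show ?thesis by (simp add: chart_image_eq[OF assms(1)])
qed

lemma closed_chart_preimage: assumes "j \<in> I" "closedin M A" shows "closed {y. chart_inv j y \<in> A}"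
proof -
  have "{y. chart_inv j y \<in> A} = - {y. chart_inv j y \<in> topspace M - A}"
    using chart_inv_in_topspace[OF assms(1)] by auto
  then show ?thesis
    using open_chart_preimage[OF assms(1), of "topspace M - A"] assms(2) by (simp add: closed_Compl closedin_def)
qed

lemma Cinf_space_iff: "f \<in> Cinf_space I U \<phi> W \<longleftrightarrow>
   (\<forall>j\<in>I. smooth_on_euc (f \<circ> chart_inv j) {y. chart_inv j y \<in> W}) \<and> (\<forall>x. x \<notin> W \<longrightarrow> f x = 0)"
  unfolding Cinf_space_def mf_smooth_def chart_inv_def[symmetric] using chart_image_eq by auto

lemma Cinf_space_smooth_in_chart:
  "w \<in> Cinf_space I U \<phi> W \<Longrightarrow> j \<in> I \<Longrightarrow> smooth_on_euc (\<lambda>z. w (chart_inv j z)) {y. chart_inv j y \<in> W}"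
  unfolding Cinf_space_iff by (simp add: o_def)

lemma zero_in_Cinf_space: "(\<lambda>x. 0) \<in> Cinf_space I U \<phi> W"
  unfolding Cinf_space_iff by (simp add: o_def smooth_on_euc_zero)

lemma lincomb_closed_Cinf_space:
  assumes W: "openin M W"
  shows "lincomb_closed (Cinf_space I U \<phi> W :: ('m \<Rightarrow> real^'n::finite) set)"
  unfolding lincomb_closed_def
proof (intro ballI allI)
  fix f g :: "'m \<Rightarrow> real^'n" and a b assume "f \<in> Cinf_space I U \<phi> W" "g \<in> Cinf_space I U \<phi> W"
  then show "(\<lambda>x. a *\<^sub>R f x + b *\<^sub>R g x) \<in> Cinf_space I U \<phi> W"
    unfolding Cinf_space_iff o_def
    by (auto intro!: smooth_on_euc_lincomb[OF open_chart_preimage[OF _ W]])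
qed

lemma Cinf_space_diff:
  assumes "openin M W" "g \<in> Cinf_space I U \<phi> W" "v \<in> Cinf_space I U \<phi> W"
  shows "(\<lambda>x. g x - v x) \<in> Cinf_space I U \<phi> W"
  using lincomb_closed_Cinf_space[OF assms(1), unfolded lincomb_closed_def, rule_format, of g v 1 "-1"] assms(2,3)
  by simp

lemma Cinf_space_sum:
  assumes W: "openin M W" and "finite A" "\<And>a. a \<in> A \<Longrightarrow> f a \<in> Cinf_space I U \<phi> W"
  shows "(\<lambda>x. \<Sum>a\<in>A. f a x) \<in> Cinf_space I U \<phi> W"
  using assms(2,3)
proof (induction A rule: finite_induct)
  case empty
  then show ?case by (simp add: zero_in_Cinf_space)
next
  case (insert a A)
  then have "f a \<in> Cinf_space I U \<phi> W" "(\<lambda>x. \<Sum>a\<in>A. f a x) \<in> Cinf_space I U \<phi> W" by auto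
  then show ?case
    using lincomb_closed_Cinf_space[OF W, unfolded lincomb_closed_def, rule_format,
        of "f a" "\<lambda>x. \<Sum>a\<in>A. f a x" 1 1] insert(1,2) by simp
qed

lemma dsum_summands_Cinf:
  "\<forall>i\<in>I. openin M (W i) \<Longrightarrow> dsum_summands I (\<lambda>i. Cinf_space I U \<phi> (W i)) (\<lambda>i. Cinf_top I U \<phi> (W i))"
  unfolding dsum_summands_def by (simp add: zero_in_Cinf_space lincomb_closed_Cinf_space)

lemma Cinf_seminorms_eq: "Cinf_seminorms I U \<phi> W =
  {(\<lambda>f. sup_norm_on K (pder ks (f \<circ> chart_inv j))) | j K ks. j \<in> I \<and> compact K \<and> K \<subseteq> {y. chart_inv j y \<in> W}}"
proof -
  have "(j \<in> I \<and> compact K \<and> K \<subseteq> \<phi> j ` (U j \<inter> W)) \<longleftrightarrow> (j \<in> I \<and> compact K \<and> K \<subseteq> {y. chart_inv j y \<in> W})"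
    for j K using chart_image_eq[of j W] by auto
  then show ?thesis
    unfolding Cinf_seminorms_def sup_norm_on_def[abs_def] chart_inv_def[symmetric] by simp
qed

text \<open>Evaluation at a point is the seminorm for the empty multi-index and the compact set \<open>{\<phi> k x}\<close>.\<close>

lemma openin_Cinf_top_eval_ball:
  assumes k: "k \<in> I" and x: "x \<in> W" "W \<subseteq> U k"
  shows "openin (Cinf_top I U \<phi> W) {v \<in> Cinf_space I U \<phi> W. norm (v x :: real^'n::finite) < \<delta>}"
  unfolding Cinf_top_eq_seminorm_top openin_seminorm_top seminorm_open_def
proof (intro conjI ballI)
  fix v0 :: "'m \<Rightarrow> real^'n" assume v0: "v0 \<in> {v \<in> Cinf_space I U \<phi> W. norm (v x) < \<delta>}"
  define p where "p = (\<lambda>f :: 'm \<Rightarrow> real^'n. sup_norm_on {\<phi> k x} (pder [] (f \<circ> chart_inv k)))"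
  have inv: "chart_inv k (\<phi> k x) = x" using chart_inv_chart[OF k] x by blast
  then have p_eq: "p f = norm (f x)" for f unfolding p_def by simp
  have "p \<in> Cinf_seminorms I U \<phi> W" unfolding Cinf_seminorms_eq p_def
    using k inv x by (intro CollectI exI[of _ k] exI[of _ "{\<phi> k x}"] exI[of _ "[]"]) auto
  moreover have "seminorm_ball (Cinf_space I U \<phi> W) {p} v0 (\<delta> - norm (v0 x)) \<subseteq> {v \<in> Cinf_space I U \<phi> W. norm (v x) < \<delta>}"
  proof
    fix g assume "g \<in> seminorm_ball (Cinf_space I U \<phi> W) {p} v0 (\<delta> - norm (v0 x))"
    then have "g \<in> Cinf_space I U \<phi> W" "norm (g x - v0 x) < \<delta> - norm (v0 x)"
      unfolding seminorm_ball_def p_eq by auto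
    then show "g \<in> {v \<in> Cinf_space I U \<phi> W. norm (v x) < \<delta>}"
      using norm_triangle_sub[of "g x" "v0 x"] by auto
  qed
  ultimately show "\<exists>P e. finite P \<and> P \<subseteq> Cinf_seminorms I U \<phi> W \<and> e > 0 \<and>
      seminorm_ball (Cinf_space I U \<phi> W) P v0 e \<subseteq> {v \<in> Cinf_space I U \<phi> W. norm (v x) < \<delta>}"
    using v0 by (intro exI[of _ "{p}"] exI[of _ "\<delta> - norm (v0 x)"]) auto
qed auto

section \<open>The mixing map\<close>

definition overlaps :: "'i \<Rightarrow> 'i set" where
  "overlaps i = {j\<in>I. U j \<inter> U i \<noteq> {}}"

lemma overlaps_subset: "overlaps i \<subseteq> I"
  unfolding overlaps_def by auto

lemma overlaps_sym: "i \<in> I \<Longrightarrow> k \<in> I \<Longrightarrow> k \<in> overlaps i \<longleftrightarrow> i \<in> overlaps k"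
  unfolding overlaps_def by auto

lemma self_in_overlaps: "i \<in> I \<Longrightarrow> i \<in> overlaps i"
  unfolding overlaps_def using chart_onto by force

lemma finite_overlaps: assumes "i \<in> I" shows "finite (overlaps i)"
proof -
  have "overlaps i \<subseteq> {j\<in>I. U j \<inter> M closure_of (U i) \<noteq> {}}"
    unfolding overlaps_def using closure_of_subset[OF openin_subset[OF openin_U[OF assms]]] by blast
  then show ?thesis
    using finite_indices_meeting_compactin[OF loc_fin] rel_compact assms finite_subset by blast
qed

definition pou_support :: "'i \<Rightarrow> 'm set" where
  "pou_support l = M closure_of {x\<in>topspace M. \<rho> l x \<noteq> 0}"

lemma closedin_pou_support: "closedin M (pou_support l)"
  unfolding pou_support_def by simp

lemma pou_support_subset: "l \<in> I \<Longrightarrow> pou_support l \<subseteq> V l"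
  unfolding pou_support_def using pou_supp by simp

lemma pou_eq_0: "x \<in> topspace M \<Longrightarrow> x \<notin> pou_support l \<Longrightarrow> \<rho> l x = 0"
  unfolding pou_support_def using closure_of_subset[of "{x\<in>topspace M. \<rho> l x \<noteq> 0}" M] by auto

lemma smooth_pou_in_chart:
  assumes l: "l \<in> I" and j: "j \<in> I"
  shows "smooth_on_euc (\<lambda>z. c * \<rho> l (chart_inv j z)) S"
proof -
  have "smooth_on_euc (\<rho> l \<circ> chart_inv j) (\<phi> j ` (U j \<inter> topspace M))"
    using pou_smooth l j unfolding mf_smooth_def chart_inv_def by blast
  then have "smooth_on_euc (\<rho> l \<circ> chart_inv j) UNIV"
    by (simp add: chart_image_eq[OF j] chart_inv_in_topspace[OF j])
  from smooth_on_euc_lincomb[OF open_UNIV this this, of c 0] show ?thesis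
    using smooth_on_euc_subset by fastforce
qed

text \<open>The summands of the mixing map are the cutoffs with \<open>c = 1\<close>; other values of \<open>c\<close> enter the
  averaging argument of \<open>mix_summand_nbhd\<close>.\<close>

definition cutoff :: "real \<Rightarrow> 'i \<Rightarrow> 'i \<Rightarrow> ('m \<Rightarrow> 'v::real_vector) \<Rightarrow> 'm \<Rightarrow> 'v" where
  "cutoff c k l w = (\<lambda>x. if x \<in> V k \<and> x \<in> V l then (c * \<rho> l x) *\<^sub>R w x else 0)"

lemma cutoff_zero [simp]: "cutoff c k l (\<lambda>x. 0 :: 'v::real_vector) = (\<lambda>x. 0)"
  unfolding cutoff_def by (simp add: fun_eq_iff)

lemma cutoff_diff: "cutoff c k l (\<lambda>x. g x - v x) = (\<lambda>x. cutoff c k l g x - cutoff c k l v x)"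
  unfolding cutoff_def by (simp add: fun_eq_iff scaleR_diff_right)

lemma cutoff_eq_0_outside_support:
  "j \<in> I \<Longrightarrow> chart_inv j z \<notin> pou_support l \<Longrightarrow> cutoff c k l w (chart_inv j z) = 0"
  unfolding cutoff_def using pou_eq_0[OF chart_inv_in_topspace] by simp

lemma
  assumes "k \<in> I" "l \<in> I" "j \<in> I"
  shows open_chart_preimage_VV: "open {y. chart_inv j y \<in> V k \<inter> V l}"
    and open_chart_preimage_V_minus_support: "open {y. chart_inv j y \<in> V k - pou_support l}"
  using open_chart_preimage[OF assms(3) openin_Int[OF openin_V openin_V]]
    open_chart_preimage[OF assms(3) openin_diff[OF openin_V closedin_pou_support]] assms(1,2) by auto

lemma smooth_cutoff_on_VV:
  assumes k: "k \<in> I" and l: "l \<in> I" and j: "j \<in> I" and w: "w \<in> Cinf_space I U \<phi> (U l)"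
  shows "smooth_on_euc (\<lambda>z. (c * \<rho> l (chart_inv j z)) *\<^sub>R w (chart_inv j z)) {y. chart_inv j y \<in> V k \<inter> V l}"
proof (rule smooth_on_euc_scaleR[OF open_chart_preimage_VV[OF k l j] smooth_pou_in_chart[OF l j]])
  have "{y. chart_inv j y \<in> V k \<inter> V l} \<subseteq> {y. chart_inv j y \<in> U l}" using V_subset_U[OF l] by auto
  then show "smooth_on_euc (\<lambda>z. w (chart_inv j z)) {y. chart_inv j y \<in> V k \<inter> V l}"
    using Cinf_space_smooth_in_chart[OF w j] smooth_on_euc_subset by blast
qed

text \<open>Near points outside the support of \<open>\<rho> l\<close> the cutoff vanishes, elsewhere it is a product of smooth maps.\<close>

lemma cutoff_in_Cinf_space:
  assumes k: "k \<in> I" and l: "l \<in> I" and w: "w \<in> Cinf_space I U \<phi> (U l)"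
  shows "cutoff c k l w \<in> Cinf_space I U \<phi> (V k)"
  unfolding Cinf_space_iff
proof (intro conjI ballI allI impI)
  fix x assume "x \<notin> V k" then show "cutoff c k l w x = 0" unfolding cutoff_def by simp
next
  fix j assume j: "j \<in> I"
  show "smooth_on_euc (cutoff c k l w \<circ> chart_inv j) {y. chart_inv j y \<in> V k}"
  proof (rule smooth_on_euc_local)
    show "open {y. chart_inv j y \<in> V k}" using open_chart_preimage[OF j openin_V[OF k]] .
    fix y assume y: "y \<in> {y. chart_inv j y \<in> V k}"
    show "\<exists>G g. open G \<and> y \<in> G \<and> smooth_on_euc g G \<and> (\<forall>z\<in>G. (cutoff c k l w \<circ> chart_inv j) z = g z)"
    proof (cases "chart_inv j y \<in> pou_support l")
      case True
      then show ?thesis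
        using y pou_support_subset[OF l] smooth_cutoff_on_VV[OF k l j w] open_chart_preimage_VV[OF k l j]
        by (intro exI[of _ "{y. chart_inv j y \<in> V k \<inter> V l}"] exI) (auto simp: cutoff_def)
    next
      case False
      then show ?thesis
        using y smooth_on_euc_zero open_chart_preimage_V_minus_support[OF k l j]
          cutoff_eq_0_outside_support[OF j]
        by (intro exI[of _ "{y. chart_inv j y \<in> V k - pou_support l}"] exI[of _ "\<lambda>z. 0"]) auto
    qed
  qed
qed

lemma sup_norm_pder_cutoff_le:
  fixes c :: real
  assumes k: "k \<in> I" and l: "l \<in> I" and j: "j \<in> I"
    and K: "compact K" "K \<subseteq> {y. chart_inv j y \<in> V k}" and w: "w \<in> Cinf_space I U \<phi> (U l)"
  defines "K' \<equiv> K \<inter> {y. chart_inv j y \<in> pou_support l}"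
    and "r \<equiv> \<lambda>z. c * \<rho> l (chart_inv j z)"
  shows "sup_norm_on K (pder ks (cutoff c k l w \<circ> chart_inv j))
    \<le> (\<Sum>q\<leftarrow>leibniz_splits ks. sup_norm_on K' (pder (fst q) r) * sup_norm_on K' (pder (snd q) (w \<circ> chart_inv j)))"
proof (rule sup_norm_on_le)
  let ?A = "{y. chart_inv j y \<in> V k \<inter> V l}"
  have K': "compact K'" "K' \<subseteq> ?A"
    unfolding K'_def using compact_Int_closed[OF K(1) closed_chart_preimage[OF j closedin_pou_support]]
      K(2) pou_support_subset[OF l] by auto
  have r: "smooth_on_euc r ?A" unfolding r_def by (rule smooth_pou_in_chart[OF l j])
  have "?A \<subseteq> {y. chart_inv j y \<in> U l}" using V_subset_U[OF l] by auto
  then have wA: "smooth_on_euc (w \<circ> chart_inv j) ?A"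
    using Cinf_space_smooth_in_chart[OF w j] smooth_on_euc_subset by (simp add: o_def)
  have cont: "continuous_on K' (pder ks r)" "continuous_on K' (pder ks (w \<circ> chart_inv j))" for ks
    using continuous_on_pder[OF r] continuous_on_pder[OF wA] K'(2) continuous_on_subset by blast+
  show "0 \<le> (\<Sum>q\<leftarrow>leibniz_splits ks. sup_norm_on K' (pder (fst q) r) * sup_norm_on K' (pder (snd q) (w \<circ> chart_inv j)))"
    using sup_norm_on_nonneg[OF K'(1) cont(1)] sup_norm_on_nonneg[OF K'(1) cont(2)]
    by (intro sum_list_nonneg) auto
  fix y assume y: "y \<in> K"
  show "norm (pder ks (cutoff c k l w \<circ> chart_inv j) y)
    \<le> (\<Sum>q\<leftarrow>leibniz_splits ks. sup_norm_on K' (pder (fst q) r) * sup_norm_on K' (pder (snd q) (w \<circ> chart_inv j)))"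
  proof (cases "y \<in> K'")
    case True
    have "pder ks (cutoff c k l w \<circ> chart_inv j) y = pder ks (\<lambda>z. r z *\<^sub>R (w \<circ> chart_inv j) z) y"
      using True K'(2) by (intro pder_cong_open[OF open_chart_preimage_VV[OF k l j]]) (auto simp: cutoff_def r_def)
    then show ?thesis
      using norm_pder_scaleR_le[OF open_chart_preimage_VV[OF k l j] r wA K' True] by simp
  next
    case False
    then have "pder ks (cutoff c k l w \<circ> chart_inv j) y = pder ks (\<lambda>z. 0) y"
      using y K(2) cutoff_eq_0_outside_support[OF j]
      by (intro pder_cong_open[OF open_chart_preimage_V_minus_support[OF k l j]]) (auto simp: K'_def)
    then show ?thesis
      using \<open>0 \<le> (\<Sum>q\<leftarrow>leibniz_splits ks. _)\<close> by simp
  qed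
qed

lemma cutoff_seminorm_dominated:
  assumes k: "k \<in> I" and l: "l \<in> I" and p: "p \<in> Cinf_seminorms I U \<phi> (V k)"
  shows "\<exists>R. (\<forall>r\<in>set R. fst r \<ge> 0 \<and> snd r \<in> Cinf_seminorms I U \<phi> (U l)) \<and>
    (\<forall>w\<in>Cinf_space I U \<phi> (U l). p (cutoff c k l w) \<le> (\<Sum>r\<leftarrow>R. fst r * snd r (w :: 'm \<Rightarrow> real^'n::finite)))"
proof -
  obtain j K ks where p_eq: "p = (\<lambda>f. sup_norm_on K (pder ks (f \<circ> chart_inv j)))"
    and j: "j \<in> I" and K: "compact K" "K \<subseteq> {y. chart_inv j y \<in> V k}"
    using p unfolding Cinf_seminorms_eq by blast
  define K' where "K' = K \<inter> {y. chart_inv j y \<in> pou_support l}"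
  define r where "r = (\<lambda>z. c * \<rho> l (chart_inv j z))"
  define R where "R = map (\<lambda>q. (sup_norm_on K' (pder (fst q) r),
    \<lambda>f :: 'm \<Rightarrow> real^'n. sup_norm_on K' (pder (snd q) (f \<circ> chart_inv j)))) (leibniz_splits ks)"
  have K': "compact K'" "K' \<subseteq> {y. chart_inv j y \<in> U l}"
    unfolding K'_def using compact_Int_closed[OF K(1) closed_chart_preimage[OF j closedin_pou_support]]
      K(2) pou_support_subset[OF l] V_subset_U[OF l] by auto
  have "sup_norm_on K' (pder as r) \<ge> 0" for as
    using sup_norm_on_nonneg[OF K'(1)] continuous_on_pder[OF smooth_pou_in_chart[OF l j]]
      continuous_on_subset unfolding r_def by blast
  moreover have "(\<lambda>f :: 'm \<Rightarrow> real^'n. sup_norm_on K' (pder bs (f \<circ> chart_inv j))) \<in> Cinf_seminorms I U \<phi> (U l)" for bs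
    unfolding Cinf_seminorms_eq using j K' by blast
  moreover have "p (cutoff c k l w) \<le> (\<Sum>r\<leftarrow>R. fst r * snd r w)" if "w \<in> Cinf_space I U \<phi> (U l)" for w
    using sup_norm_pder_cutoff_le[OF k l j K that] unfolding p_eq R_def K'_def r_def by (simp add: o_def)
  ultimately show ?thesis
    by (intro exI[of _ R]) (auto simp: R_def)
qed

lemma continuous_map_cutoff:
  assumes k: "k \<in> I" and l: "l \<in> I"
  shows "continuous_map (Cinf_top I U \<phi> (U l)) (Cinf_top I U \<phi> (V k)) (cutoff c k l :: ('m \<Rightarrow> real^'n::finite) \<Rightarrow> _)"
  unfolding Cinf_top_eq_seminorm_top
proof (rule continuous_map_seminorm_top)
  show "\<forall>v\<in>Cinf_space I U \<phi> (U l). cutoff c k l v \<in> Cinf_space I U \<phi> (V k)"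
    using cutoff_in_Cinf_space[OF k l] by blast
  show "\<forall>g\<in>Cinf_space I U \<phi> (U l). \<forall>v\<in>Cinf_space I U \<phi> (U l). (\<lambda>x. g x - v x) \<in> Cinf_space I U \<phi> (U l)"
    using Cinf_space_diff[OF openin_U[OF l]] by blast
qed (auto simp: cutoff_diff cutoff_seminorm_dominated[OF k l])

lemma openin_cutoff_preimages:
  assumes i: "i \<in> I" and N: "\<And>k. k \<in> overlaps i \<Longrightarrow> openin (Cinf_top I U \<phi> (V k)) (N k)"
  shows "openin (Cinf_top I U \<phi> (U i))
    {v \<in> Cinf_space I U \<phi> (U i). \<forall>k\<in>overlaps i. cutoff c k i (v :: 'm \<Rightarrow> real^'n::finite) \<in> N k}"
proof -
  have "openin (Cinf_top I U \<phi> (U i)) {v \<in> Cinf_space I U \<phi> (U i). cutoff c k i v \<in> N k}"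
    if k: "k \<in> overlaps i" for k
    using continuous_map_cutoff[OF subsetD[OF overlaps_subset k] i] N[OF k]
    unfolding continuous_map topspace_Cinf_top by blast
  then have "openin (Cinf_top I U \<phi> (U i))
      (Cinf_space I U \<phi> (U i) \<inter> (\<Inter>k\<in>overlaps i. {v \<in> Cinf_space I U \<phi> (U i). cutoff c k i v \<in> N k}))"
    using finite_overlaps[OF i] openin_topspace[of "Cinf_top I U \<phi> (U i)"]
    by (intro openin_Int_Inter) auto
  moreover have "Cinf_space I U \<phi> (U i) \<inter> (\<Inter>k\<in>overlaps i. {v \<in> Cinf_space I U \<phi> (U i). cutoff c k i v \<in> N k})
      = {v \<in> Cinf_space I U \<phi> (U i). \<forall>k\<in>overlaps i. cutoff c k i v \<in> N k}"
    by blast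
  ultimately show ?thesis by simp
qed

lemma mix_lincomb:
  "mix I U V \<rho> (\<lambda>i x. a *\<^sub>R F i x + b *\<^sub>R G i x) = (\<lambda>i x. a *\<^sub>R mix I U V \<rho> F i x + b *\<^sub>R mix I U V \<rho> G i x)"
  unfolding mix_def
  by (intro ext) (simp add: scaleR_sum_right sum.distrib[symmetric] if_distrib algebra_simps cong: if_cong)

lemma mix_eq_sum_cutoff: "i \<in> I \<Longrightarrow> mix I U V \<rho> F i = (\<lambda>x. \<Sum>l\<in>overlaps i. cutoff 1 i l (F l) x)"
  unfolding mix_def cutoff_def overlaps_def by (intro ext) (simp only: mult_1_left, simp)

lemma mix_in_dsum_carrier:
  fixes F :: "'i \<Rightarrow> 'm \<Rightarrow> real^'n::finite"
  assumes F: "F \<in> dsum_carrier I (\<lambda>i. Cinf_space I U \<phi> (U i))"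
  shows "mix I U V \<rho> F \<in> dsum_carrier I (\<lambda>i. Cinf_space I U \<phi> (V i))"
proof -
  have F_in: "\<forall>i\<in>I. F i \<in> Cinf_space I U \<phi> (U i)" and F_fin: "finite {i\<in>I. F i \<noteq> (\<lambda>x. 0)}"
    using F unfolding dsum_carrier_def by auto
  have "mix I U V \<rho> F i \<in> Cinf_space I U \<phi> (V i)" if i: "i \<in> I" for i
    unfolding mix_eq_sum_cutoff[OF i] using F_in overlaps_subset
    by (intro Cinf_space_sum[OF openin_V[OF i] finite_overlaps[OF i]] cutoff_in_Cinf_space[OF i]) auto
  moreover have "{i\<in>I. mix I U V \<rho> F i \<noteq> (\<lambda>x. 0)} \<subseteq> (\<Union>l\<in>{l\<in>I. F l \<noteq> (\<lambda>x. 0)}. overlaps l)"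
  proof
    fix i assume "i \<in> {i\<in>I. mix I U V \<rho> F i \<noteq> (\<lambda>x. 0)}"
    then have i: "i \<in> I" and "mix I U V \<rho> F i \<noteq> (\<lambda>x. 0)" by auto
    have "\<exists>l\<in>overlaps i. F l \<noteq> (\<lambda>x. 0)"
    proof (rule ccontr)
      assume "\<not> (\<exists>l\<in>overlaps i. F l \<noteq> (\<lambda>x. 0))"
      then have "(\<lambda>x. \<Sum>l\<in>overlaps i. cutoff 1 i l (F l) x) = (\<lambda>x. \<Sum>l\<in>overlaps i. cutoff 1 i l (\<lambda>x. 0) x)"
        by (intro ext sum.cong) auto
      then show False using \<open>mix I U V \<rho> F i \<noteq> (\<lambda>x. 0)\<close> by (simp add: mix_eq_sum_cutoff[OF i])
    qed
    then obtain l where "l \<in> overlaps i" "F l \<noteq> (\<lambda>x. 0)" by blast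
    then show "i \<in> (\<Union>l\<in>{l\<in>I. F l \<noteq> (\<lambda>x. 0)}. overlaps l)"
      using overlaps_sym[OF i] overlaps_subset by blast
  qed
  then have "finite {i\<in>I. mix I U V \<rho> F i \<noteq> (\<lambda>x. 0)}"
    using F_fin finite_overlaps finite_subset by blast
  ultimately show ?thesis unfolding dsum_carrier_def by (auto simp: mix_def)
qed

text \<open>At a point of \<open>V i \<inter> V j\<close> both components are the full sum \<open>\<Sum>\<^sub>l \<rho>\<^sub>l f\<^sub>l\<close>: every \<open>l\<close> with \<open>x \<in> V l\<close> overlaps both \<open>i\<close> and \<open>j\<close>.\<close>

lemma mix_compatible:
  assumes i: "i \<in> I" and j: "j \<in> I" and x: "x \<in> V i" "x \<in> V j"
  shows "mix I U V \<rho> F j x = mix I U V \<rho> F i x"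
proof -
  define t where "t l = (if x \<in> V l then \<rho> l x *\<^sub>R F l x else 0)" for l
  have sum_eq: "mix I U V \<rho> F k x = (\<Sum>l\<in>overlaps i \<inter> overlaps j. t l)" if "k \<in> {i, j}" for k
  proof -
    have k: "k \<in> I" "x \<in> V k" using that i j x by auto
    have "t l = 0" if "l \<in> overlaps k" "l \<notin> overlaps i \<inter> overlaps j" for l
    proof -
      have "l \<in> I" using that(1) overlaps_subset by blast
      then have "x \<notin> V l"
        using that(2) x V_subset_U[OF i] V_subset_U[OF j] V_subset_U[of l] unfolding overlaps_def by blast
      then show ?thesis by (simp add: t_def)
    qed
    then have "(\<Sum>l\<in>overlaps k. t l) = (\<Sum>l\<in>overlaps i \<inter> overlaps j. t l)"
      using \<open>k \<in> {i, j}\<close> by (intro sum.mono_neutral_right[OF finite_overlaps[OF k(1)]]) auto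
    then show ?thesis unfolding mix_def t_def overlaps_def using k by simp
  qed
  show ?thesis using sum_eq[of i] sum_eq[of j] by simp
qed

lemma mix_inj_at:
  assumes i: "i \<in> I" and c: "c \<noteq> 0"
  shows "mix I U V \<rho> (inj_at i (v :: 'm \<Rightarrow> real^'n::finite))
    = (\<lambda>j x. \<Sum>k\<in>overlaps i. (1 / c) *\<^sub>R inj_at k (cutoff c k i v) j x)"
proof (intro ext)
  fix j x
  have "(\<Sum>k\<in>overlaps i. (1 / c) *\<^sub>R inj_at k (cutoff c k i v) j x)
      = (if j \<in> overlaps i then (1 / c) *\<^sub>R cutoff c j i v x else 0)"
    unfolding inj_at_def scaleR_sum_right[symmetric]
    by (simp add: if_distrib[of "\<lambda>f. f x"] sum.delta'[OF finite_overlaps[OF i]] cong: if_cong)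
  also have "\<dots> = (if j \<in> I \<and> x \<in> V j then (if i \<in> overlaps j \<and> x \<in> V i then \<rho> i x *\<^sub>R v x else 0) else 0)"
    using overlaps_sym[OF i] overlaps_subset c by (auto simp: cutoff_def)
  also have "\<dots> = mix I U V \<rho> (inj_at i v) j x"
  proof (cases "j \<in> I \<and> x \<in> V j")
    case True
    have "mix I U V \<rho> (inj_at i v) j x = (\<Sum>l\<in>overlaps j. if x \<in> V l then \<rho> l x *\<^sub>R inj_at i v l x else 0)"
      using True unfolding mix_def overlaps_def by simp
    also have "\<dots> = (\<Sum>l\<in>overlaps j. if l = i then (if x \<in> V i then \<rho> i x *\<^sub>R v x else 0) else 0)"
      by (intro sum.cong) (auto simp: inj_at_def)
    also have "\<dots> = (if i \<in> overlaps j then (if x \<in> V i then \<rho> i x *\<^sub>R v x else 0) else 0)"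
      using True by (intro sum.delta finite_overlaps) blast
    finally show ?thesis using True by simp
  qed (auto simp: mix_def)
  finally show "mix I U V \<rho> (inj_at i v) j x = (\<Sum>k\<in>overlaps i. (1 / c) *\<^sub>R inj_at k (cutoff c k i v) j x)" ..
qed

text \<open>With \<open>m\<close> the number of overlapping charts, \<open>mix (inj_at i v)\<close> is the average of the \<open>m\<close> points
  \<open>inj_at k (cutoff m k i v)\<close>; each lies in the absolutely convex \<open>W\<close> once \<open>v\<close> is small, hence so does
  the average.\<close>

lemma mix_summand_nbhd:
  fixes W :: "('i \<Rightarrow> 'm \<Rightarrow> real^'n::finite) set"
  assumes i: "i \<in> I" and W: "abs_convex W"
    and nbhd: "dsum_zero_nbhd I (\<lambda>i. Cinf_space I U \<phi> (V i)) (\<lambda>i. Cinf_top I U \<phi> (V i)) W"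
  shows "\<exists>N. openin (Cinf_top I U \<phi> (U i)) N \<and> (\<lambda>x. 0) \<in> N
    \<and> N \<subseteq> {v \<in> Cinf_space I U \<phi> (U i). mix I U V \<rho> (inj_at i v) \<in> W}"
proof -
  have "\<forall>k\<in>overlaps i. \<exists>N. openin (Cinf_top I U \<phi> (V k)) N \<and> (\<lambda>x. 0) \<in> N
    \<and> N \<subseteq> {v \<in> Cinf_space I U \<phi> (V k). inj_at k v \<in> W}"
    using nbhd overlaps_subset unfolding dsum_zero_nbhd_def by blast
  then obtain Nk where "\<forall>k\<in>overlaps i. openin (Cinf_top I U \<phi> (V k)) (Nk k) \<and> (\<lambda>x. 0) \<in> Nk k
    \<and> Nk k \<subseteq> {v \<in> Cinf_space I U \<phi> (V k). inj_at k v \<in> W}"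
    by (rule bchoice[THEN exE])
  then have Nk: "openin (Cinf_top I U \<phi> (V k)) (Nk k)" "(\<lambda>x. 0) \<in> Nk k"
    "Nk k \<subseteq> {v \<in> Cinf_space I U \<phi> (V k). inj_at k v \<in> W}" if "k \<in> overlaps i" for k
    using that by auto
  define m where "m = real (card (overlaps i))"
  have m: "m > 0" unfolding m_def using finite_overlaps[OF i] self_in_overlaps[OF i] card_gt_0_iff by auto
  define N where "N = {v \<in> Cinf_space I U \<phi> (U i). \<forall>k\<in>overlaps i. cutoff m k i v \<in> Nk k}"
  have "openin (Cinf_top I U \<phi> (U i)) N"
    unfolding N_def using Nk(1) by (rule openin_cutoff_preimages[OF i])
  moreover have "(\<lambda>x. 0) \<in> N" unfolding N_def using Nk by (simp add: zero_in_Cinf_space)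
  moreover have "mix I U V \<rho> (inj_at i v) \<in> W" if v: "v \<in> N" for v
  proof -
    have "inj_at k (cutoff m k i v) \<in> W" if k: "k \<in> overlaps i" for k
    proof -
      have "cutoff m k i v \<in> Nk k" using v k unfolding N_def by blast
      then show ?thesis using Nk(3)[OF k] by blast
    qed
    then have "(\<lambda>j x. \<Sum>k\<in>overlaps i. (1 / m) *\<^sub>R inj_at k (cutoff m k i v) j x) \<in> W"
      using m dsum_zero_nbhd_zero[OF nbhd i]
      by (intro abs_convex_sum[OF W _ finite_overlaps[OF i]]) (auto simp: m_def)
    moreover have "m \<noteq> 0" using m by simp
    ultimately show ?thesis by (simp add: mix_inj_at[OF i])
  qed
  moreover have "N \<subseteq> Cinf_space I U \<phi> (U i)" unfolding N_def by blast
  ultimately show ?thesis by blast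
qed

lemma continuous_map_mix:
  "continuous_map (dsum_top I (\<lambda>i. Cinf_space I U \<phi> (U i)) (\<lambda>i. Cinf_top I U \<phi> (U i)))
     (dsum_top I (\<lambda>i. Cinf_space I U \<phi> (V i)) (\<lambda>i. Cinf_top I U \<phi> (V i)))
     (mix I U V \<rho> :: ('i \<Rightarrow> 'm \<Rightarrow> real^'n::finite) \<Rightarrow> _)"
  using dsum_summands_Cinf openin_U openin_V mix_in_dsum_carrier mix_lincomb mix_summand_nbhd
  by (intro continuous_map_dsum_top_linear) auto

lemma closedin_compatible:
  "closedin (dsum_top I (\<lambda>i. Cinf_space I U \<phi> (V i)) (\<lambda>i. Cinf_top I U \<phi> (V i)))
     {G\<in>dsum_carrier I (\<lambda>i. Cinf_space I U \<phi> (V i) :: ('m \<Rightarrow> real^'n::finite) set).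
      \<forall>i\<in>I. \<forall>j\<in>I. \<forall>x\<in>V i \<inter> V j. G j x = G i x}"
  by (intro closedin_dsum_top_compatible dsum_summands_Cinf)
    (auto simp: openin_V intro!: openin_Cinf_top_eval_ball dest: V_subset_U)

end

theorem lemma4p11:
  fixes M :: "'m topology" and I :: "'i set"
    and U V :: "'i \<Rightarrow> 'm set" and \<phi> :: "'i \<Rightarrow> 'm \<Rightarrow> real^'d::finite"
    and \<rho> :: "'i \<Rightarrow> 'm \<Rightarrow> real"
  assumes hausdorff: "Hausdorff_space M"
    and sigma_compact: "\<exists>K :: nat \<Rightarrow> 'm set. (\<forall>k. compactin M (K k)) \<and> (\<Union>k. K k) = topspace M"
    and atlas: "smooth_atlas M I U \<phi>"
    and chart_onto: "\<forall>i\<in>I. \<phi> i ` U i = UNIV"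
    and loc_fin: "\<forall>x\<in>topspace M. \<exists>N. openin M N \<and> x \<in> N \<and> finite {i\<in>I. U i \<inter> N \<noteq> {}}"
    and rel_compact: "\<forall>i\<in>I. compactin M (M closure_of (U i))"
    and V_open: "\<forall>i\<in>I. openin M (V i) \<and> M closure_of (V i) \<subseteq> U i"
    and pou_smooth: "\<forall>i\<in>I. mf_smooth I U \<phi> (topspace M) (\<rho> i)"
    and pou_nonneg: "\<forall>i\<in>I. \<forall>x\<in>topspace M. \<rho> i x \<ge> 0"
    and pou_supp: "\<forall>i\<in>I. M closure_of {x\<in>topspace M. \<rho> i x \<noteq> 0} \<subseteq> V i"
    and pou_fin: "\<forall>x\<in>topspace M. finite {i\<in>I. \<rho> i x \<noteq> 0}"
    and pou_sum: "\<forall>x\<in>topspace M. (\<Sum>i\<in>{i\<in>I. \<rho> i x \<noteq> 0}. \<rho> i x) = 1"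
  defines "D \<equiv> dsum_carrier I (\<lambda>i. Cinf_space I U \<phi> (U i) :: ('m \<Rightarrow> real^'n::finite) set)"
    and "TD \<equiv> dsum_top I (\<lambda>i. Cinf_space I U \<phi> (U i)) (\<lambda>i. Cinf_top I U \<phi> (U i))"
    and "E \<equiv> dsum_carrier I (\<lambda>i. Cinf_space I U \<phi> (V i) :: ('m \<Rightarrow> real^'n) set)"
    and "TE \<equiv> dsum_top I (\<lambda>i. Cinf_space I U \<phi> (V i)) (\<lambda>i. Cinf_top I U \<phi> (V i))"
    and "S \<equiv> {G\<in>dsum_carrier I (\<lambda>i. Cinf_space I U \<phi> (V i) :: ('m \<Rightarrow> real^'n) set). \<forall>i\<in>I. \<forall>j\<in>I. \<forall>x\<in>V i \<inter> V j. G j x = G i x}"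
  shows "mix I U V \<rho> ` D \<subseteq> E
    \<and> (\<forall>F\<in>D. \<forall>G\<in>D. \<forall>a b. mix I U V \<rho> (\<lambda>i x. a *\<^sub>R F i x + b *\<^sub>R G i x)
            = (\<lambda>i x. a *\<^sub>R mix I U V \<rho> F i x + b *\<^sub>R mix I U V \<rho> G i x))
    \<and> continuous_map TD TE (mix I U V \<rho>)
    \<and> mix I U V \<rho> ` D \<subseteq> S
    \<and> closedin TE S"
proof -
  interpret atlas_pou M I U V \<phi> \<rho>
    using atlas chart_onto loc_fin rel_compact V_open pou_smooth pou_supp by unfold_locales
  have maps: "mix I U V \<rho> ` D \<subseteq> E"
    unfolding D_def E_def using mix_in_dsum_carrier by blast
  have "mix I U V \<rho> F \<in> S" if "F \<in> D" for F
  proof -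
    have "mix I U V \<rho> F \<in> E" using maps that by blast
    moreover have "\<forall>i\<in>I. \<forall>j\<in>I. \<forall>x\<in>V i \<inter> V j. mix I U V \<rho> F j x = mix I U V \<rho> F i x"
      by (auto intro!: mix_compatible)
    ultimately show ?thesis unfolding S_def E_def by (intro CollectI conjI)
  qed
  then show ?thesis
    unfolding TD_def TE_def S_def
    using maps mix_lincomb continuous_map_mix closedin_compatible by auto
qed

end
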